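(* The characters (non-zero multiplicative linear functionals) of the commutative Banach algebra $C(X)'_1$ are, without multiple occurrences, the following, where $\sum_k f_k\delta^k\in C(X)'_1$: (i) for $x\in X$ with $x\notin\bigcup_{q\ge1}\mathrm{Fix}_q(\sigma)^\circ$: $\omega_x\big(\sum_k f_k\delta^k\big)=f_0(x)$; (ii) for $x\in\bigcup_{q\ge1}\mathrm{Fix}_q(\sigma)^\circ$ and $c\in\mathbb{T}$: $\omega_{x,c}\big(\sum_k f_k\delta^k\big)=\sum_{j\in\mathbb{Z}} f_{jn}(x)c^j$, where $n$ is the minimal integer $n\ge1$ such that $x\in\mathrm{Fix}_n(\sigma)^\circ$. All characters of $C(X)'_1$ are hermitian (i.e. $\omega(a^* )=\overline{\omega(a)}$), and the map from the maximal ideal space $\Delta(C(X)'_1)$ to $\Delta(C(X))$ given by restriction of characters is a continuous surjection.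
   Context: Let $X$ be a non-empty compact Hausdorff space and $\sigma:X\to X$ a homeomorphism. For $n\in\mathbb{Z}$ let $\mathrm{Fix}_n(\sigma)=\{x\in X:\sigma^n x=x\}$; a superscript $\circ$ denotes interior in $X$, and $\mathrm{supp}(f)$ is the closure of $\{f\neq0\}$. $C(X)$ is the algebra of continuous complex functions on $X$ with sup norm $\|\cdot\|_\infty$, and $\alpha(f)=f\circ\sigma^{-1}$. $\ell^1(\Sigma)$ is the set of maps $\ell:\mathbb{Z}\to C(X)$ with $\|\ell\|=\sum_k\|\ell(k)\|_\infty<\infty$, with product $(\ell\ell')(n)=\sum_k\ell(k)\,\alpha^k(\ell'(n-k))$ and involution $\ell^*(n)=\overline{\alpha^n(\ell(-n))}$; it is a unital Banach $*$-algebra. Let $\delta$ be the element with $\delta(1)=1$ (constant function) and $\delta(m)=0$ for $m\neq1$; $C(X)$ is identified with $\{f\delta^0\}$, every element is uniquely written $\sum_k f_k\delta^k$ with $f_k=\ell(k)$, and $\delta f\delta^{-1}=f\circ\sigma^{-1}$, $\delta^*=\delta^{-1}$, $f^*=\bar f$. $C(X)'_1$ denotes the commutant of $C(X)$ in $\ell^1(\Sigma)$; it equals $\{\sum_k f_k\delta^k\in\ell^1(\Sigma):\mathrm{supp}(f_k)\subset\mathrm{Fix}_k(\sigma)\text{ for all }k\}$ and is a commutative closed unital $*$-subalgebra. Maximal ideal spaces carry the Gelfand (weak-$*$) topology; $\mathbb{T}$ is the unit circle. *)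

theory Defs
  imports "HOL-Analysis.Analysis"
begin

definition ipow :: "('a \<Rightarrow> 'a) \<Rightarrow> int \<Rightarrow> 'a \<Rightarrow> 'a" where
  "ipow \<sigma> k = (if 0 \<le> k then \<sigma> ^^ nat k else (inv \<sigma>) ^^ nat (- k))"

definition Fix :: "('a \<Rightarrow> 'a) \<Rightarrow> int \<Rightarrow> 'a set" where
  "Fix \<sigma> n = {x. ipow \<sigma> n x = x}"

definition supp :: "('a::topological_space \<Rightarrow> complex) \<Rightarrow> 'a set" where
  "supp f = closure {x. f x \<noteq> 0}"

definition supnorm :: "('a \<Rightarrow> complex) \<Rightarrow> real" where
  "supnorm f = (SUP x. cmod (f x))"

text \<open>C(X): continuous complex functions on X (= UNIV of the type).\<close>
definition CX :: "('a::topological_space \<Rightarrow> complex) set" where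
  "CX = {f. continuous_on UNIV f}"

text \<open>l^1(Sigma): maps Z -> C(X) with summable sup norms; an element l is
  the formal sum of (l k) delta^k.\<close>
definition ell1 :: "(int \<Rightarrow> 'a::topological_space \<Rightarrow> complex) set" where
  "ell1 = {l. (\<forall>k. l k \<in> CX) \<and> (\<lambda>k. supnorm (l k)) summable_on UNIV}"

text \<open>alpha^k(f) = f o sigma^(-k).\<close>
definition ell_mult :: "('a \<Rightarrow> 'a) \<Rightarrow> (int \<Rightarrow> 'a \<Rightarrow> complex) \<Rightarrow> (int \<Rightarrow> 'a \<Rightarrow> complex)
    \<Rightarrow> (int \<Rightarrow> 'a \<Rightarrow> complex)" where
  "ell_mult \<sigma> l l' = (\<lambda>n x. \<Sum>\<^sub>\<infinity>k. l k x * l' (n - k) (ipow \<sigma> (- k) x))"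

definition ell_star :: "('a \<Rightarrow> 'a) \<Rightarrow> (int \<Rightarrow> 'a \<Rightarrow> complex) \<Rightarrow> (int \<Rightarrow> 'a \<Rightarrow> complex)" where
  "ell_star \<sigma> l = (\<lambda>n x. cnj (l (- n) (ipow \<sigma> (- n) x)))"

definition ell_add :: "(int \<Rightarrow> 'a \<Rightarrow> complex) \<Rightarrow> (int \<Rightarrow> 'a \<Rightarrow> complex) \<Rightarrow> (int \<Rightarrow> 'a \<Rightarrow> complex)" where
  "ell_add l l' = (\<lambda>n x. l n x + l' n x)"

definition ell_smult :: "complex \<Rightarrow> (int \<Rightarrow> 'a \<Rightarrow> complex) \<Rightarrow> (int \<Rightarrow> 'a \<Rightarrow> complex)" where
  "ell_smult c l = (\<lambda>n x. c * l n x)"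

definition emb :: "('a \<Rightarrow> complex) \<Rightarrow> (int \<Rightarrow> 'a \<Rightarrow> complex)" where
  "emb f = (\<lambda>k. if k = 0 then f else (\<lambda>_. 0))"

definition commutant1 :: "('a::topological_space \<Rightarrow> 'a) \<Rightarrow> (int \<Rightarrow> 'a \<Rightarrow> complex) set" where
  "commutant1 \<sigma> = {a \<in> ell1. \<forall>f \<in> CX. ell_mult \<sigma> a (emb f) = ell_mult \<sigma> (emb f) a}"

definition is_character :: "'b set \<Rightarrow> ('b \<Rightarrow> 'b \<Rightarrow> 'b) \<Rightarrow> ('b \<Rightarrow> 'b \<Rightarrow> 'b)
    \<Rightarrow> (complex \<Rightarrow> 'b \<Rightarrow> 'b) \<Rightarrow> ('b \<Rightarrow> complex) \<Rightarrow> bool" where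
  "is_character S ad mu sm \<omega> \<longleftrightarrow>
     (\<forall>a\<in>S. \<forall>b\<in>S. \<omega> (ad a b) = \<omega> a + \<omega> b) \<and>
     (\<forall>c. \<forall>a\<in>S. \<omega> (sm c a) = c * \<omega> a) \<and>
     (\<forall>a\<in>S. \<forall>b\<in>S. \<omega> (mu a b) = \<omega> a * \<omega> b) \<and>
     (\<exists>a\<in>S. \<omega> a \<noteq> 0)"

definition char_space :: "'b set \<Rightarrow> ('b \<Rightarrow> 'b \<Rightarrow> 'b) \<Rightarrow> ('b \<Rightarrow> 'b \<Rightarrow> 'b)
    \<Rightarrow> (complex \<Rightarrow> 'b \<Rightarrow> 'b) \<Rightarrow> ('b \<Rightarrow> complex) set" where
  "char_space S ad mu sm = {\<omega> \<in> extensional S. is_character S ad mu sm \<omega>}"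

text \<open>Gelfand (weak-*) topology: topology of pointwise convergence on S.\<close>
definition gelfand_top :: "'b set \<Rightarrow> ('b \<Rightarrow> complex) set \<Rightarrow> ('b \<Rightarrow> complex) topology" where
  "gelfand_top S D = subtopology (product_topology (\<lambda>_. euclidean) S) D"

definition DeltaA :: "('a::topological_space \<Rightarrow> 'a) \<Rightarrow> ((int \<Rightarrow> 'a \<Rightarrow> complex) \<Rightarrow> complex) set" where
  "DeltaA \<sigma> = char_space (commutant1 \<sigma>) ell_add (ell_mult \<sigma>) ell_smult"

definition DeltaCX :: "(('a::topological_space \<Rightarrow> complex) \<Rightarrow> complex) set" where
  "DeltaCX = char_space CX (\<lambda>f g x. f x + g x) (\<lambda>f g x. f x * g x) (\<lambda>c f x. c * f x)"

definition restr_char :: "((int \<Rightarrow> 'a \<Rightarrow> complex) \<Rightarrow> complex) \<Rightarrow> ('a::topological_space \<Rightarrow> complex) \<Rightarrow> complex" where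
  "restr_char \<omega> = restrict (\<lambda>f. \<omega> (emb f)) CX"

definition PerInt :: "('a::topological_space \<Rightarrow> 'a) \<Rightarrow> 'a set" where
  "PerInt \<sigma> = (\<Union>q\<in>{1::nat..}. interior (Fix \<sigma> (int q)))"

definition minper :: "('a::topological_space \<Rightarrow> 'a) \<Rightarrow> 'a \<Rightarrow> nat" where
  "minper \<sigma> x = (LEAST n::nat. 1 \<le> n \<and> x \<in> interior (Fix \<sigma> (int n)))"

definition omega_x :: "('a::topological_space \<Rightarrow> 'a) \<Rightarrow> 'a \<Rightarrow> (int \<Rightarrow> 'a \<Rightarrow> complex) \<Rightarrow> complex" where
  "omega_x \<sigma> x = restrict (\<lambda>a. a 0 x) (commutant1 \<sigma>)"

definition omega_xc :: "('a::topological_space \<Rightarrow> 'a) \<Rightarrow> 'a \<Rightarrow> complex \<Rightarrow> (int \<Rightarrow> 'a \<Rightarrow> complex) \<Rightarrow> complex" where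
  "omega_xc \<sigma> x c = restrict
     (\<lambda>a. \<Sum>\<^sub>\<infinity>j::int. a (j * int (minper \<sigma> x)) x * c powi j) (commutant1 \<sigma>)"

end

theory Submission
  imports Defs
begin

text \<open>
  The coefficients \<open>f\<^sub>k\<close> of an element of \<open>C(X)'\<^sub>1\<close> are continuous and supported in \<open>Fix\<^sub>k\<close>, hence
  vanish off \<open>Fix\<^sub>k\<^sup>\<circ>\<close>. A character \<open>\<omega>\<close> is contractive (Neumann series), so it may be evaluated
  termwise on \<open>\<Sum> f\<^sub>k \<delta>\<^sup>k\<close>, and it restricts on \<open>C(X)\<close> to the evaluation at some point \<open>x\<close>.
  Multiplying by Urysohn functions concentrated at \<open>x\<close> shows \<open>\<omega> (f \<delta>\<^sup>k) = 0\<close> whenever \<open>f x = 0\<close>, so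
  \<open>\<omega> (f \<delta>\<^sup>k) = f x \<cdot> \<omega> (u \<delta>\<^sup>k)\<close> for a bump \<open>u\<close> at \<open>x\<close>. If \<open>x\<close> is in no \<open>Fix\<^sub>q\<^sup>\<circ>\<close>, only \<open>k = 0\<close>
  survives and \<open>\<omega> = \<omega>\<^sub>x\<close>; otherwise only multiples of the minimal period \<open>n\<close> survive, and
  \<open>j \<mapsto> \<omega> (u \<delta>\<^sup>j\<^sup>n)\<close> is a bounded character of \<open>\<int>\<close>, i.e. \<open>j \<mapsto> c\<^sup>j\<close> with \<open>|c| = 1\<close>, so \<open>\<omega> = \<omega>\<^sub>x\<^sub>,\<^sub>c\<close>.
  Conversely \<open>\<omega>\<^sub>x\<close> and \<open>\<omega>\<^sub>x\<^sub>,\<^sub>c\<close> are characters (for \<open>\<omega>\<^sub>x\<^sub>,\<^sub>c\<close> by a Cauchy product), they are told apart by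
  \<open>C(X)\<close> and by \<open>u \<delta>\<^sup>n\<close>, and their formulas are visibly hermitian. Restriction to \<open>C(X)\<close> is a
  coordinate projection, hence weak-* continuous, and onto since every point evaluation extends.
\<close>

section \<open>Unordered sums\<close>

lemma infsum_eq_single:
  fixes g :: "'i \<Rightarrow> 'b::{comm_monoid_add, t2_space}"
  assumes "\<And>k. k \<noteq> n \<Longrightarrow> g k = 0"
  shows "infsum g UNIV = g n"
proof -
  have "infsum g UNIV = infsum g {n}"
    by (rule infsum_cong_neutral) (use assms in auto)
  then show ?thesis by simp
qed

lemma summable_on_single:
  fixes g :: "'i \<Rightarrow> 'b::{comm_monoid_add, t2_space}"
  assumes "\<And>k. k \<noteq> n \<Longrightarrow> g k = 0"
  shows "g summable_on UNIV"
proof -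
  have "g summable_on {n}" by simp
  then show ?thesis
    by (rule summable_on_cong_neutral[THEN iffD1, rotated -1]) (use assms in auto)
qed

lemma infsum_nonzero_witness: "infsum f A \<noteq> 0 \<Longrightarrow> \<exists>x\<in>A. f x \<noteq> 0"
  using infsum_0[of A f] by blast

lemma dominated_summable_on:
  fixes g :: "'i \<Rightarrow> 'b::banach"
  assumes "M summable_on A" "\<And>k. k \<in> A \<Longrightarrow> norm (g k) \<le> M k"
  shows "g summable_on A"
  by (rule abs_summable_summable, rule summable_on_comparison_test[OF assms(1)]) (use assms(2) in auto)

lemma norm_infsum_le_dominating:
  fixes g :: "'i \<Rightarrow> 'b::banach"
  assumes "M summable_on A" "\<And>k. k \<in> A \<Longrightarrow> norm (g k) \<le> M k"
  shows "norm (infsum g A) \<le> infsum M A"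
proof -
  have abs: "(\<lambda>k. norm (g k)) summable_on A"
    by (rule summable_on_comparison_test[OF assms(1)]) (use assms(2) in auto)
  have "norm (infsum g A) \<le> infsum (\<lambda>k. norm (g k)) A"
    by (rule norm_infsum_bound[OF abs])
  also have "\<dots> \<le> infsum M A"
    by (rule infsum_mono[OF abs assms(1)]) (use assms(2) in auto)
  finally show ?thesis .
qed

lemma element_le_infsum:
  fixes M :: "'i \<Rightarrow> real"
  assumes "M summable_on UNIV" "\<And>k. 0 \<le> M k"
  shows "M k \<le> infsum M UNIV"
  using finite_sum_le_infsum[OF assms(1), of "{k}"] assms(2) by simp

lemma infsum_Compl_finite:
  fixes f :: "'i \<Rightarrow> 'b::{topological_ab_group_add, t2_space}"
  assumes "f summable_on UNIV" "finite S"
  shows "infsum f (- S) = infsum f UNIV - sum f S"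
  using infsum_Diff[OF assms(1) summable_on_finite[OF assms(2)]] assms(2)
  by (simp add: Compl_eq_Diff_UNIV)

lemma tendsto_infsum_Compl:
  fixes f :: "'i \<Rightarrow> 'b::{topological_ab_group_add, t2_space}"
  assumes "f summable_on UNIV"
  shows "((\<lambda>S. infsum f (- S)) \<longlongrightarrow> 0) (finite_subsets_at_top UNIV)"
proof (rule Lim_transform_eventually)
  have "((\<lambda>S. infsum f UNIV - sum f S) \<longlongrightarrow> infsum f UNIV - infsum f UNIV) (finite_subsets_at_top UNIV)"
    using has_sum_infsum[OF assms] by (intro tendsto_diff tendsto_const) (simp add: has_sum_def)
  then show "((\<lambda>S. infsum f UNIV - sum f S) \<longlongrightarrow> 0) (finite_subsets_at_top UNIV)" by simp
  show "\<forall>\<^sub>F S in finite_subsets_at_top UNIV. infsum f UNIV - sum f S = infsum f (- S)"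
    by (rule eventually_finite_subsets_at_top_weakI) (simp add: infsum_Compl_finite[OF assms])
qed

lemma continuous_on_infsum_dominated:
  fixes F :: "'i \<Rightarrow> 'a::topological_space \<Rightarrow> 'b::banach"
  assumes "\<And>i. continuous_on UNIV (F i)" "\<And>i x. norm (F i x) \<le> M i" "M summable_on UNIV"
  shows "continuous_on UNIV (\<lambda>x. infsum (\<lambda>i. F i x) UNIV)"
proof (rule uniform_limit_theorem)
  show "\<forall>\<^sub>F S in finite_subsets_at_top UNIV. continuous_on UNIV (\<lambda>x. sum (\<lambda>i. F i x) S)"
    by (intro always_eventually allI continuous_on_sum) (auto intro: assms(1))
  show "uniform_limit UNIV (\<lambda>S x. sum (\<lambda>i. F i x) S) (\<lambda>x. infsum (\<lambda>i. F i x) UNIV)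
      (finite_subsets_at_top UNIV)"
    unfolding uniform_limit_iff
  proof (intro allI impI)
    fix e :: real assume "e > 0"
    then have "\<forall>\<^sub>F S in finite_subsets_at_top UNIV. infsum M (- S) < e"
      using tendsto_infsum_Compl[OF assms(3)] by (auto dest: order_tendstoD(2))
    moreover have "\<forall>\<^sub>F S in finite_subsets_at_top UNIV. finite S"
      by (rule eventually_finite_subsets_at_top_weakI) simp
    ultimately show "\<forall>\<^sub>F S in finite_subsets_at_top UNIV.
        \<forall>x\<in>UNIV. dist (sum (\<lambda>i. F i x) S) (infsum (\<lambda>i. F i x) UNIV) < e"
    proof eventually_elim
      case (elim S)
      show ?case
      proof
        fix x
        have "(\<lambda>i. F i x) summable_on UNIV" by (rule dominated_summable_on[OF assms(3,2)])
        then have "dist (sum (\<lambda>i. F i x) S) (infsum (\<lambda>i. F i x) UNIV) = norm (infsum (\<lambda>i. F i x) (- S))"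
          using elim by (simp add: infsum_Compl_finite dist_norm norm_minus_commute)
        also have "\<dots> \<le> infsum M (- S)"
          by (rule norm_infsum_le_dominating[OF summable_on_subset[OF assms(3)]]) (auto intro: assms(2))
        finally show "dist (sum (\<lambda>i. F i x) S) (infsum (\<lambda>i. F i x) UNIV) < e" using elim by simp
      qed
    qed
  qed
qed simp

lemma summable_on_product_nonneg:
  fixes P :: "'i \<Rightarrow> real" and Q :: "'j \<Rightarrow> real"
  assumes "P summable_on UNIV" "Q summable_on UNIV" "\<And>i. 0 \<le> P i" "\<And>j. 0 \<le> Q j"
  shows "(\<lambda>(i, j). P i * Q j) summable_on UNIV"
proof -
  have "(\<lambda>ij. P (fst ij) * Q (snd ij)) summable_on Sigma UNIV (\<lambda>_. UNIV)"
  proof (rule summable_on_SigmaI)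
    fix i
    show "((\<lambda>j. P (fst (i, j)) * Q (snd (i, j))) has_sum (P i * infsum Q UNIV)) UNIV"
      using has_sum_cmult_right[OF has_sum_infsum[OF assms(2)], of "P i"] by simp
    show "(\<lambda>i. P i * infsum Q UNIV) summable_on UNIV"
      by (rule summable_on_cmult_left[OF assms(1)])
  qed (use assms in auto)
  then show ?thesis by (simp add: case_prod_beta')
qed

lemma cauchy_product_int:
  fixes \<alpha> \<beta> :: "int \<Rightarrow> 'c::{real_normed_algebra, banach}"
  assumes sa: "(\<lambda>k. norm (\<alpha> k)) summable_on UNIV" and sb: "(\<lambda>k. norm (\<beta> k)) summable_on UNIV"
  shows "(\<lambda>k. \<alpha> k * \<beta> (n - k)) summable_on UNIV"
    and "(\<lambda>n. infsum (\<lambda>k. \<alpha> k * \<beta> (n - k)) UNIV) summable_on UNIV"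
    and "infsum (\<lambda>n. infsum (\<lambda>k. \<alpha> k * \<beta> (n - k)) UNIV) UNIV = infsum \<alpha> UNIV * infsum \<beta> UNIV"
proof -
  have "(\<lambda>(k, m). norm (\<alpha> k) * norm (\<beta> m)) summable_on UNIV"
    by (rule summable_on_product_nonneg[OF sa sb]) auto
  then have "(\<lambda>km. norm ((\<lambda>(k, m). \<alpha> k * \<beta> m) km)) summable_on UNIV"
    by (rule summable_on_comparison_test) (auto simp: norm_mult_ineq)
  then have prod: "(\<lambda>(k, m). \<alpha> k * \<beta> m) summable_on UNIV" by (rule abs_summable_summable)
  have "(\<lambda>(k, m). \<alpha> k * \<beta> m) summable_on UNIV \<longleftrightarrow> (\<lambda>(n, k). \<alpha> k * \<beta> (n - k)) summable_on UNIV"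
    by (rule summable_on_reindex_bij_witness[of _ "\<lambda>(n, k). (k, n - k)" "\<lambda>(k, m). (k + m, k)"]) auto
  then have diag: "(\<lambda>(n, k). \<alpha> k * \<beta> (n - k)) summable_on Sigma UNIV (\<lambda>_. UNIV)" using prod by simp
  have inner: "(\<lambda>k. \<alpha> k * \<beta> (n - k)) summable_on UNIV" for n
  proof (rule dominated_summable_on)
    show "(\<lambda>k. norm (\<alpha> k) * infsum (\<lambda>k. norm (\<beta> k)) UNIV) summable_on UNIV"
      by (rule summable_on_cmult_left[OF sa])
    fix k
    have "norm (\<alpha> k * \<beta> (n - k)) \<le> norm (\<alpha> k) * norm (\<beta> (n - k))" by (rule norm_mult_ineq)
    also have "\<dots> \<le> norm (\<alpha> k) * infsum (\<lambda>k. norm (\<beta> k)) UNIV"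
      by (intro mult_left_mono element_le_infsum[OF sb]) auto
    finally show "norm (\<alpha> k * \<beta> (n - k)) \<le> norm (\<alpha> k) * infsum (\<lambda>k. norm (\<beta> k)) UNIV" .
  qed
  show "(\<lambda>k. \<alpha> k * \<beta> (n - k)) summable_on UNIV" by (rule inner)
  show "(\<lambda>n. infsum (\<lambda>k. \<alpha> k * \<beta> (n - k)) UNIV) summable_on UNIV"
    using summable_on_SigmaD[OF diag] inner by simp
  have "infsum (\<lambda>n. infsum (\<lambda>k. \<alpha> k * \<beta> (n - k)) UNIV) UNIV = infsum (\<lambda>(n, k). \<alpha> k * \<beta> (n - k)) UNIV"
    using infsum_Sigma_banach[OF diag] by simp
  also have "\<dots> = infsum (\<lambda>(k, m). \<alpha> k * \<beta> m) UNIV"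
    by (rule infsum_reindex_bij_witness[of _ "\<lambda>(k, m). (k + m, k)" "\<lambda>(n, k). (k, n - k)"]) auto
  also have "\<dots> = infsum (\<lambda>k. infsum (\<lambda>m. \<alpha> k * \<beta> m) UNIV) UNIV"
    using infsum_Sigma_banach[of "\<lambda>(k, m). \<alpha> k * \<beta> m" UNIV "\<lambda>_. UNIV"] prod by simp
  also have "\<dots> = infsum \<alpha> UNIV * infsum \<beta> UNIV"
    using abs_summable_summable[OF sa] abs_summable_summable[OF sb]
    by (simp add: infsum_cmult_right infsum_cmult_left)
  finally show "infsum (\<lambda>n. infsum (\<lambda>k. \<alpha> k * \<beta> (n - k)) UNIV) UNIV = infsum \<alpha> UNIV * infsum \<beta> UNIV" .
qed

lemma summable_on_multiples:
  fixes f :: "int \<Rightarrow> 'b::{complete_uniform_space, uniform_topological_group_add, ab_group_add, topological_comm_monoid_add}"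
  assumes "f summable_on UNIV" "N \<noteq> 0"
  shows "(\<lambda>j. f (j * N)) summable_on UNIV"
proof -
  have "f summable_on range (\<lambda>j. j * N)" by (rule summable_on_subset[OF assms(1)]) auto
  then show ?thesis using assms(2) by (subst (asm) summable_on_reindex) (auto simp: inj_on_def o_def)
qed

lemma infsum_supported_on_multiples:
  fixes f :: "int \<Rightarrow> 'b::{comm_monoid_add, t2_space}"
  assumes "\<And>k. f k \<noteq> 0 \<Longrightarrow> N dvd k" "N \<noteq> 0"
  shows "infsum f UNIV = infsum (\<lambda>j. f (j * N)) UNIV"
proof -
  have "infsum f UNIV = infsum f (range (\<lambda>j. j * N))"
    by (rule infsum_cong_neutral) (use assms(1) in \<open>auto simp: image_iff dvd_def mult.commute\<close>)
  also have "\<dots> = infsum (\<lambda>j. f (j * N)) UNIV"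
    using assms(2) by (subst infsum_reindex) (auto simp: inj_on_def o_def)
  finally show ?thesis .
qed

lemma summable_on_geometric:
  fixes r :: real
  assumes "0 \<le> r" "r < 1"
  shows "(\<lambda>m::nat. r ^ m) summable_on UNIV"
  by (rule summable_nonneg_imp_summable_on) (use assms in \<open>auto intro!: summable_geometric\<close>)

lemma infsum_Suc_shift:
  fixes f :: "nat \<Rightarrow> 'b::{topological_ab_group_add, t2_space}"
  assumes "f summable_on UNIV"
  shows "infsum (\<lambda>m. f (Suc m)) UNIV = infsum f UNIV - f 0"
proof -
  have "infsum (\<lambda>m. f (Suc m)) UNIV = infsum f (- {0})"
    by (subst infsum_reindex_bij_witness[of _ Suc "\<lambda>m. m - 1"]) auto
  also have "\<dots> = infsum f UNIV - f 0" by (simp add: infsum_Compl_finite[OF assms])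
  finally show ?thesis .
qed

section \<open>Continuous functions and the characters of \<open>C(X)\<close>\<close>

lemma CX_const [simp]: "(\<lambda>_. c) \<in> CX"
  by (simp add: CX_def)

lemma CX_add: "f \<in> CX \<Longrightarrow> g \<in> CX \<Longrightarrow> (\<lambda>x. f x + g x) \<in> CX"
  by (simp add: CX_def continuous_on_add)

lemma CX_mult: "f \<in> CX \<Longrightarrow> g \<in> CX \<Longrightarrow> (\<lambda>x. f x * g x) \<in> CX"
  by (simp add: CX_def continuous_on_mult)

lemma CX_cmult: "f \<in> CX \<Longrightarrow> (\<lambda>x. c * f x) \<in> CX"
  by (simp add: CX_def continuous_on_mult_left)

lemma CX_cnj: "f \<in> CX \<Longrightarrow> (\<lambda>x. cnj (f x)) \<in> CX"
  by (simp add: CX_def)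

lemma open_nonzero_CX: "f \<in> CX \<Longrightarrow> open {x. f x \<noteq> 0}"
  using open_Collect_neq[of f "\<lambda>_. 0"] by (simp add: CX_def)

lemma supnorm_le: "(\<And>x. cmod (f x) \<le> M) \<Longrightarrow> supnorm f \<le> M"
  unfolding supnorm_def by (rule cSUP_least) auto

lemma urysohn_complex:
  fixes S T :: "'a::t2_space set"
  assumes "compact (UNIV :: 'a set)" "closed S" "closed T" "S \<inter> T = {}"
  obtains f :: "'a \<Rightarrow> complex"
  where "f \<in> CX" "\<And>x. cmod (f x) \<le> 1" "\<And>x. x \<in> S \<Longrightarrow> f x = 0" "\<And>x. x \<in> T \<Longrightarrow> f x = 1"
proof -
  have "normal_space (euclidean :: 'a topology)"
  proof (rule compact_Hausdorff_or_regular_imp_normal_space)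
    show "compact_space (euclidean :: 'a topology)"
      using assms(1) by (simp add: compact_space_def)
    show "Hausdorff_space (euclidean :: 'a topology) \<or> regular_space (euclidean :: 'a topology)"
      unfolding Hausdorff_space_def disjnt_def using hausdorff by auto
  qed
  then obtain g where g: "continuous_map euclidean (top_of_set {0::real..1}) g" "g ` S \<subseteq> {0}" "g ` T \<subseteq> {1}"
    using Urysohn_lemma[of euclidean S T 0 1] assms(2-4) by (auto simp: disjnt_def)
  have "continuous_on UNIV g" "\<And>x. g x \<in> {0..1}"
    using g(1) unfolding continuous_map_in_subtopology by auto
  then show ?thesis
    using g(2,3) by (intro that[of "\<lambda>x. complex_of_real (g x)"]) (auto simp: CX_def intro: continuous_on_of_real)
qed

lemma CX_separates_points:
  fixes x y :: "'a::t2_space"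
  assumes "compact (UNIV :: 'a set)" "\<And>f :: 'a \<Rightarrow> complex. f \<in> CX \<Longrightarrow> f x = f y"
  shows "x = y"
proof (rule ccontr)
  assume "x \<noteq> y"
  then have "closed {x}" "closed {y}" "{x} \<inter> {y} = {}" by auto
  then obtain f :: "'a \<Rightarrow> complex" where "f \<in> CX" "\<And>z. z \<in> {x} \<Longrightarrow> f z = 0" "\<And>z. z \<in> {y} \<Longrightarrow> f z = 1"
    by (rule urysohn_complex[OF assms(1)]) blast
  with assms(2)[of f] show False by simp
qed

lemma norm_le_supnorm:
  fixes f :: "'a::topological_space \<Rightarrow> complex"
  assumes "compact (UNIV :: 'a set)" "f \<in> CX"
  shows "cmod (f x) \<le> supnorm f"
proof -
  have "bounded (range f)"
    using assms by (intro compact_imp_bounded compact_continuous_image) (auto simp: CX_def)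
  then have "bdd_above (range (\<lambda>x. cmod (f x)))"
    by (auto simp: bounded_iff bdd_above_def)
  then show ?thesis unfolding supnorm_def by (rule cSUP_upper[rotated]) simp
qed

lemma supnorm_nonneg:
  fixes f :: "'a::topological_space \<Rightarrow> complex"
  assumes "compact (UNIV :: 'a set)" "f \<in> CX"
  shows "0 \<le> supnorm f"
  using norm_le_supnorm[OF assms, of undefined] norm_ge_zero[of "f undefined"] by linarith

lemma DeltaCX_iff:
  "\<phi> \<in> DeltaCX \<longleftrightarrow> \<phi> \<in> extensional CX \<and>
     (\<forall>f\<in>CX. \<forall>g\<in>CX. \<phi> (\<lambda>x. f x + g x) = \<phi> f + \<phi> g) \<and>
     (\<forall>c. \<forall>f\<in>CX. \<phi> (\<lambda>x. c * f x) = c * \<phi> f) \<and>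
     (\<forall>f\<in>CX. \<forall>g\<in>CX. \<phi> (\<lambda>x. f x * g x) = \<phi> f * \<phi> g) \<and> (\<exists>f\<in>CX. \<phi> f \<noteq> 0)"
  by (simp add: DeltaCX_def char_space_def is_character_def)

lemma
  assumes "\<phi> \<in> DeltaCX" "f \<in> CX" "g \<in> CX"
  shows DeltaCX_add: "\<phi> (\<lambda>x. f x + g x) = \<phi> f + \<phi> g"
    and DeltaCX_mult: "\<phi> (\<lambda>x. f x * g x) = \<phi> f * \<phi> g"
  using assms by (simp_all add: DeltaCX_iff)

lemma DeltaCX_cmult: "\<phi> \<in> DeltaCX \<Longrightarrow> f \<in> CX \<Longrightarrow> \<phi> (\<lambda>x. c * f x) = c * \<phi> f"
  by (simp add: DeltaCX_iff)

lemma DeltaCX_const: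
  assumes "\<phi> \<in> DeltaCX" shows "\<phi> (\<lambda>_. c) = c"
proof -
  obtain f where f: "f \<in> CX" "\<phi> f \<noteq> 0" using assms by (auto simp: DeltaCX_iff)
  have "\<phi> f = \<phi> (\<lambda>x. 1 * f x)" by simp
  also have "\<dots> = \<phi> (\<lambda>_. 1) * \<phi> f" by (rule DeltaCX_mult[OF assms CX_const f(1)])
  finally have "\<phi> (\<lambda>_. 1) = 1" using f(2) by simp
  then show ?thesis using DeltaCX_cmult[OF assms CX_const, of c 1] by simp
qed

lemma DeltaCX_sum:
  assumes "\<phi> \<in> DeltaCX" "finite F" "\<And>i. i \<in> F \<Longrightarrow> h i \<in> CX"
  shows "(\<lambda>x. \<Sum>i\<in>F. h i x) \<in> CX \<and> \<phi> (\<lambda>x. \<Sum>i\<in>F. h i x) = (\<Sum>i\<in>F. \<phi> (h i))"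
  using assms(2,3)
proof (induction F rule: finite_induct)
  case empty
  then show ?case using DeltaCX_const[OF assms(1), of 0] by simp
next
  case (insert i F)
  then show ?case using DeltaCX_add[OF assms(1)] by (simp add: CX_add)
qed

text \<open>Gelfand's argument: if the functions in the kernel of \<open>\<phi>\<close> had no common zero, compactness
  would give finitely many \<open>f\<^sub>i\<close> in the kernel with \<open>\<Sum> |f\<^sub>i|\<^sup>2\<close> invertible.\<close>
lemma DeltaCX_common_zero:
  assumes "compact (UNIV :: 'a::topological_space set)" and \<phi>: "\<phi> \<in> (DeltaCX :: (('a \<Rightarrow> complex) \<Rightarrow> complex) set)"
  shows "\<exists>x. \<forall>f\<in>CX. \<phi> f = 0 \<longrightarrow> f x = 0"
proof (rule ccontr)
  assume "\<not> ?thesis"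
  then have "UNIV \<subseteq> (\<Union>f\<in>{f \<in> CX. \<phi> f = 0}. {x. f x \<noteq> 0})" by auto
  then obtain F where F: "F \<subseteq> {f \<in> CX. \<phi> f = 0}" "finite F" "UNIV \<subseteq> (\<Union>f\<in>F. {x. f x \<noteq> 0})"
    using compactE_image[OF assms(1), of "{f \<in> CX. \<phi> f = 0}" "\<lambda>f. {x. f x \<noteq> 0}"]
    by (auto simp: open_nonzero_CX)
  have sq: "(\<lambda>x. f x * cnj (f x)) \<in> CX \<and> \<phi> (\<lambda>x. f x * cnj (f x)) = 0" if "f \<in> F" for f
    using that F(1) CX_mult[OF _ CX_cnj, of f f] DeltaCX_mult[OF \<phi> _ CX_cnj, of f f] by auto
  define g where "g = (\<lambda>x. \<Sum>f\<in>F. f x * cnj (f x))"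
  have g: "g \<in> CX" "\<phi> g = 0"
    using DeltaCX_sum[OF \<phi> F(2), of "\<lambda>f x. f x * cnj (f x)"] sq by (simp_all add: g_def)
  have "Re (g x) > 0" for x
  proof -
    obtain f where f: "f \<in> F" "f x \<noteq> 0" using F(3) by blast
    have "(cmod (f x))\<^sup>2 \<le> (\<Sum>h\<in>F. (cmod (h x))\<^sup>2)" by (rule member_le_sum) (use f F(2) in auto)
    also have "\<dots> = Re (g x)" by (simp add: g_def complex_mult_cnj cmod_power2)
    finally show ?thesis using f(2) by (smt (verit) zero_less_power2 norm_eq_zero)
  qed
  then have gnz: "g x \<noteq> 0" for x by (metis zero_complex.sel(1) less_irrefl)
  then have "(\<lambda>x. 1 / g x) \<in> CX"
    using g(1) gnz by (simp add: CX_def continuous_on_divide)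
  moreover have "(\<lambda>x. g x * (1 / g x)) = (\<lambda>_. 1)" using gnz by auto
  ultimately have "\<phi> (\<lambda>_. 1) = \<phi> g * \<phi> (\<lambda>x. 1 / g x)"
    using DeltaCX_mult[OF \<phi> g(1)] by metis
  then show False using DeltaCX_const[OF \<phi>] g(2) by simp
qed

lemma DeltaCX_point_eval:
  assumes "compact (UNIV :: 'a::topological_space set)" and \<phi>: "\<phi> \<in> (DeltaCX :: (('a \<Rightarrow> complex) \<Rightarrow> complex) set)"
  obtains x where "\<phi> = restrict (\<lambda>f. f x) CX"
proof -
  obtain x where x: "\<And>f. f \<in> CX \<Longrightarrow> \<phi> f = 0 \<Longrightarrow> f x = 0"
    using DeltaCX_common_zero[OF assms] by blast
  have "\<phi> f = f x" if f: "f \<in> CX" for f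
  proof -
    have "f x + - \<phi> f = 0"
      by (rule x[OF CX_add[OF f CX_const]], subst DeltaCX_add[OF \<phi> f CX_const]) (simp add: DeltaCX_const[OF \<phi>])
    then show ?thesis by simp
  qed
  then have "\<phi> = restrict (\<lambda>f. f x) CX" using \<phi> by (auto simp: DeltaCX_iff extensional_def)
  then show ?thesis by (rule that)
qed

lemma bounded_int_character_powi:
  fixes \<gamma> :: "int \<Rightarrow> complex"
  assumes mult: "\<And>i j. \<gamma> (i + j) = \<gamma> i * \<gamma> j" and one: "\<gamma> 0 = 1" and bound: "\<And>j. cmod (\<gamma> j) \<le> 1"
  shows "cmod (\<gamma> 1) = 1" and "\<gamma> j = \<gamma> 1 powi j"
proof -
  have inv: "\<gamma> (- 1) * \<gamma> 1 = 1" using mult[of "- 1" 1] one by simp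
  then have "cmod (\<gamma> (- 1)) * cmod (\<gamma> 1) = 1" by (metis norm_mult norm_one)
  then show c: "cmod (\<gamma> 1) = 1"
    using mult_left_le_one_le[of "cmod (\<gamma> 1)" "cmod (\<gamma> (- 1))"] bound[of 1] bound[of "- 1"] by simp
  then have "\<gamma> 1 \<noteq> 0" by auto
  then have "\<gamma> (- 1) = \<gamma> 1 powi (- 1)" using inv by (simp add: power_int_minus field_simps)
  show "\<gamma> j = \<gamma> 1 powi j"
  proof (induction j rule: int_induct[where k = 0])
    case (step1 i)
    then show ?case using mult[of i 1] power_int_add[of "\<gamma> 1" i 1] \<open>\<gamma> 1 \<noteq> 0\<close> by simp
  next
    case (step2 i)
    then show ?case using mult[of i "- 1"] power_int_add[of "\<gamma> 1" i "- 1"] \<open>\<gamma> 1 \<noteq> 0\<close> \<open>\<gamma> (- 1) = \<gamma> 1 powi (- 1)\<close>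
      by simp
  qed (simp add: one)
qed

section \<open>Integer powers of a homeomorphism\<close>

locale homeomorphic_system =
  fixes \<sigma> \<sigma>' :: "'a::topological_space \<Rightarrow> 'a"
  assumes homeo: "homeomorphism UNIV UNIV \<sigma> \<sigma>'"
begin

lemma inverse_cancel [simp]: "\<sigma>' (\<sigma> x) = x" "\<sigma> (\<sigma>' x) = x"
  using homeo by (auto simp: homeomorphism_def)

lemma ipow_eq: "ipow \<sigma> k = (if 0 \<le> k then \<sigma> ^^ nat k else \<sigma>' ^^ nat (- k))"
proof -
  have "inv \<sigma> = \<sigma>'" by (rule inv_equality) simp_all
  then show ?thesis by (simp add: ipow_def)
qed

lemma ipow_0 [simp]: "ipow \<sigma> 0 x = x"
  by (simp add: ipow_eq)

lemma ipow_plus1: "ipow \<sigma> (k + 1) x = \<sigma> (ipow \<sigma> k x)"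
proof (cases k)
  case (nonneg n)
  then have "0 \<le> k" "nat (k + 1) = Suc (nat k)" by auto
  then show ?thesis by (simp add: ipow_eq)
next
  case (neg n)
  then show ?thesis by (cases n) (simp_all add: ipow_eq nat_add_distrib)
qed

lemma ipow_minus1: "ipow \<sigma> (k - 1) x = \<sigma>' (ipow \<sigma> k x)"
  using ipow_plus1[of "k - 1" x] by (metis diff_add_cancel inverse_cancel(1))

lemma ipow_add: "ipow \<sigma> (a + b) x = ipow \<sigma> a (ipow \<sigma> b x)"
proof (induction a rule: int_induct[where k = 0])
  case (step1 i)
  have "ipow \<sigma> (i + 1 + b) x = \<sigma> (ipow \<sigma> (i + b) x)"
    using ipow_plus1[of "i + b"] by (simp add: algebra_simps)
  then show ?case using step1 by (simp add: ipow_plus1)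
next
  case (step2 i)
  have "ipow \<sigma> (i - 1 + b) x = \<sigma>' (ipow \<sigma> (i + b) x)"
    using ipow_minus1[of "i + b"] by (simp add: algebra_simps)
  then show ?case using step2 by (simp add: ipow_minus1)
qed simp

lemma ipow_uminus_cancel [simp]: "ipow \<sigma> (- k) (ipow \<sigma> k x) = x"
  using ipow_add[of "- k" k x] by simp

lemma ipow_cancel_uminus [simp]: "ipow \<sigma> k (ipow \<sigma> (- k) x) = x"
  using ipow_add[of k "- k" x] by simp

lemma continuous_on_ipow: "continuous_on UNIV (ipow \<sigma> k)"
proof (induction k rule: int_induct[where k = 0])
  case base
  then show ?case by (simp add: ipow_eq)
next
  case (step1 i)
  have "ipow \<sigma> (i + 1) = \<sigma> \<circ> ipow \<sigma> i" by (rule ext) (simp add: ipow_plus1)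
  then show ?case
    using step1 homeo by (metis continuous_on_compose homeomorphism_def continuous_on_subset subset_UNIV)
next
  case (step2 i)
  have "ipow \<sigma> (i - 1) = \<sigma>' \<circ> ipow \<sigma> i" by (rule ext) (simp add: ipow_minus1)
  then show ?case
    using step2 homeo by (metis continuous_on_compose homeomorphism_def continuous_on_subset subset_UNIV)
qed

lemma CX_ipow: "f \<in> CX \<Longrightarrow> (\<lambda>x. f (ipow \<sigma> k x)) \<in> CX"
  using continuous_on_compose[OF continuous_on_ipow[of k], of f] continuous_on_subset[of UNIV f]
  by (simp add: CX_def o_def)

lemma Fix_uminus_iff: "x \<in> Fix \<sigma> (- k) \<longleftrightarrow> x \<in> Fix \<sigma> k"
proof -
  have sym: "ipow \<sigma> (- j) x = x" if "ipow \<sigma> j x = x" for j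
    using ipow_uminus_cancel[of j x] that by simp
  show ?thesis using sym[of k] sym[of "- k"] by (auto simp: Fix_def)
qed

lemma ipow_uminus_Fix: "x \<in> Fix \<sigma> k \<Longrightarrow> ipow \<sigma> (- k) x = x"
  using Fix_uminus_iff by (simp add: Fix_def)

lemma Fix_add: "x \<in> Fix \<sigma> a \<Longrightarrow> x \<in> Fix \<sigma> b \<Longrightarrow> x \<in> Fix \<sigma> (a + b)"
  by (simp add: Fix_def ipow_add)

lemma Fix_mult: "x \<in> Fix \<sigma> k \<Longrightarrow> x \<in> Fix \<sigma> (j * k)"
proof (induction j rule: int_induct[where k = 0])
  case base
  then show ?case by (simp add: Fix_def)
next
  case (step1 i)
  then show ?case using Fix_add[of x "i * k" k] by (simp add: algebra_simps)
next
  case (step2 i)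
  then show ?case using Fix_add[of x "i * k" "- k"] Fix_uminus_iff by (simp add: algebra_simps)
qed

lemma Fix_gcd:
  assumes "x \<in> Fix \<sigma> a" "x \<in> Fix \<sigma> b"
  shows "x \<in> Fix \<sigma> (gcd a b)"
proof -
  obtain u v where "u * a + v * b = gcd a b" using bezout_int by blast
  with Fix_add[OF Fix_mult[OF assms(1)] Fix_mult[OF assms(2)]] show ?thesis by metis
qed

end

section \<open>The commutant \<open>C(X)'\<^sub>1\<close>\<close>

definition ell_norm :: "(int \<Rightarrow> 'a \<Rightarrow> complex) \<Rightarrow> real" where
  "ell_norm a = infsum (\<lambda>k. supnorm (a k)) UNIV"

definition monomial :: "int \<Rightarrow> ('a \<Rightarrow> complex) \<Rightarrow> int \<Rightarrow> 'a \<Rightarrow> complex" where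
  "monomial k f = (\<lambda>j. if j = k then f else (\<lambda>_. 0))"

definition ell_truncate :: "int set \<Rightarrow> (int \<Rightarrow> 'a \<Rightarrow> complex) \<Rightarrow> int \<Rightarrow> 'a \<Rightarrow> complex" where
  "ell_truncate F a = (\<lambda>k. if k \<in> F then a k else (\<lambda>_. 0))"

definition ell_one :: "int \<Rightarrow> 'a \<Rightarrow> complex" where
  "ell_one = emb (\<lambda>_. 1)"

definition ell_power :: "('a \<Rightarrow> 'a) \<Rightarrow> (int \<Rightarrow> 'a \<Rightarrow> complex) \<Rightarrow> nat \<Rightarrow> int \<Rightarrow> 'a \<Rightarrow> complex" where
  "ell_power \<sigma> a m = (ell_mult \<sigma> a ^^ m) ell_one"

lemma emb_eq_monomial: "emb f = monomial 0 f"
  by (simp add: emb_def monomial_def)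

lemma ell_one_apply: "ell_one k x = (if k = 0 then 1 else 0)"
  by (simp add: ell_one_def emb_def)

lemma ell_power_0: "ell_power \<sigma> a 0 = ell_one"
  by (simp add: ell_power_def)

lemma ell_power_Suc: "ell_power \<sigma> a (Suc m) = ell_mult \<sigma> a (ell_power \<sigma> a m)"
  by (simp add: ell_power_def)

lemma ell_truncate_empty: "ell_truncate {} a = (\<lambda>k x. 0)"
  by (auto simp: ell_truncate_def)

lemma ell_truncate_insert:
  "k \<notin> F \<Longrightarrow> ell_truncate (insert k F) a = ell_add (monomial k (a k)) (ell_truncate F a)"
  by (auto simp: ell_truncate_def monomial_def ell_add_def)

lemma ell_truncate_Compl: "ell_add (ell_truncate F a) (ell_truncate (- F) a) = a"
  by (auto simp: ell_truncate_def ell_add_def)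

lemma emb_add: "emb (\<lambda>x. f x + g x) = ell_add (emb f) (emb g)"
  by (auto simp: emb_def ell_add_def)

lemma emb_cmult: "emb (\<lambda>x. c * f x) = ell_smult c (emb f)"
  by (auto simp: emb_def ell_smult_def)

locale compact_system = homeomorphic_system \<sigma> \<sigma>' for \<sigma> \<sigma>' :: "'a::t2_space \<Rightarrow> 'a" +
  assumes compact_UNIV: "compact (UNIV :: 'a set)"
begin

lemma ell1_CX: "a \<in> ell1 \<Longrightarrow> a k \<in> CX"
  by (simp add: ell1_def)

lemma ell1_summable: "a \<in> ell1 \<Longrightarrow> (\<lambda>k. supnorm (a k)) summable_on UNIV"
  by (simp add: ell1_def)

lemma ell1_supnorm_nonneg: "(a :: int \<Rightarrow> 'a \<Rightarrow> complex) \<in> ell1 \<Longrightarrow> 0 \<le> supnorm (a k)"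
  by (rule supnorm_nonneg[OF compact_UNIV ell1_CX])

lemma ell1_norm_le_supnorm: "(a :: int \<Rightarrow> 'a \<Rightarrow> complex) \<in> ell1 \<Longrightarrow> cmod (a k x) \<le> supnorm (a k)"
  by (rule norm_le_supnorm[OF compact_UNIV ell1_CX])

lemma supnorm_le_ell_norm: "(a :: int \<Rightarrow> 'a \<Rightarrow> complex) \<in> ell1 \<Longrightarrow> supnorm (a k) \<le> ell_norm a"
  unfolding ell_norm_def by (rule element_le_infsum) (auto simp: ell1_summable ell1_supnorm_nonneg)

lemma ell1_norm_le_ell_norm: "(a :: int \<Rightarrow> 'a \<Rightarrow> complex) \<in> ell1 \<Longrightarrow> cmod (a k x) \<le> ell_norm a"
  using ell1_norm_le_supnorm[of a k x] supnorm_le_ell_norm[of a k] by linarith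

lemma ell_norm_nonneg: "(a :: int \<Rightarrow> 'a \<Rightarrow> complex) \<in> ell1 \<Longrightarrow> 0 \<le> ell_norm a"
  using supnorm_le_ell_norm[of a 0] ell1_supnorm_nonneg[of a 0] by linarith

lemma
  fixes a :: "int \<Rightarrow> 'a \<Rightarrow> complex"
  assumes "\<And>k. a k \<in> CX" "\<And>k x. cmod (a k x) \<le> M k" "M summable_on UNIV"
  shows ell1_dominated: "a \<in> ell1"
    and ell_norm_le_dominating: "ell_norm a \<le> infsum M UNIV"
proof -
  have le: "supnorm (a k) \<le> M k" for k by (rule supnorm_le) (rule assms(2))
  have summable: "(\<lambda>k. supnorm (a k)) summable_on UNIV"
    by (rule summable_on_comparison_test[OF assms(3)]) (use le supnorm_nonneg[OF compact_UNIV assms(1)] in auto)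
  then show "a \<in> ell1" using assms(1) by (simp add: ell1_def)
  show "ell_norm a \<le> infsum M UNIV"
    unfolding ell_norm_def by (rule infsum_mono[OF summable assms(3)]) (use le in auto)
qed

lemma ell_mult_emb_right: "ell_mult \<sigma> a (emb f) n x = a n x * f (ipow \<sigma> (- n) x)"
proof -
  have "ell_mult \<sigma> a (emb f) n x = a n x * emb f (n - n) (ipow \<sigma> (- n) x)"
    unfolding ell_mult_def by (rule infsum_eq_single) (simp add: emb_def)
  then show ?thesis by (simp add: emb_def)
qed

lemma ell_mult_emb_left: "ell_mult \<sigma> (emb f) a = (\<lambda>n x. f x * a n x)"
proof (intro ext)
  fix n x
  have "ell_mult \<sigma> (emb f) a n x = emb f 0 x * a (n - 0) (ipow \<sigma> (- 0) x)"
    unfolding ell_mult_def by (rule infsum_eq_single) (simp add: emb_def)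
  then show "ell_mult \<sigma> (emb f) a n x = f x * a n x" by (simp add: emb_def)
qed

lemma emb_mult: "emb (\<lambda>x. f x * g x) = ell_mult \<sigma> (emb f) (emb g)"
  unfolding ell_mult_emb_left by (auto simp: emb_def)

lemma monomial_mult_emb: "ell_mult \<sigma> (emb g) (monomial k f) = monomial k (\<lambda>x. g x * f x)"
  by (auto simp: ell_mult_emb_left monomial_def)

lemma monomial_mult_monomial:
  "ell_mult \<sigma> (monomial i f) (monomial j g) = monomial (i + j) (\<lambda>y. f y * g (ipow \<sigma> (- i) y))"
proof (intro ext)
  fix n y
  have "ell_mult \<sigma> (monomial i f) (monomial j g) n y = monomial i f i y * monomial j g (n - i) (ipow \<sigma> (- i) y)"
    unfolding ell_mult_def by (rule infsum_eq_single) (simp add: monomial_def)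
  then show "ell_mult \<sigma> (monomial i f) (monomial j g) n y = monomial (i + j) (\<lambda>y. f y * g (ipow \<sigma> (- i) y)) n y"
    by (auto simp: monomial_def)
qed

text \<open>Commuting with \<open>C(X)\<close> means \<open>f\<^sub>n(x) (g(x) - g(\<sigma>\<^sup>-\<^sup>n x)) = 0\<close> for all \<open>g\<close>; Urysohn's
  lemma separates \<open>x\<close> from \<open>\<sigma>\<^sup>-\<^sup>n x\<close> unless \<open>x \<in> Fix\<^sub>n\<close>.\<close>
lemma commutant1_iff:
  "a \<in> commutant1 \<sigma> \<longleftrightarrow> a \<in> ell1 \<and> (\<forall>n x. a n x \<noteq> 0 \<longrightarrow> x \<in> Fix \<sigma> n)"
proof
  assume a: "a \<in> ell1 \<and> (\<forall>n x. a n x \<noteq> 0 \<longrightarrow> x \<in> Fix \<sigma> n)"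
  have "ell_mult \<sigma> a (emb f) = ell_mult \<sigma> (emb f) a" for f
  proof (intro ext)
    fix n x
    show "ell_mult \<sigma> a (emb f) n x = ell_mult \<sigma> (emb f) a n x"
      using a ipow_uminus_Fix[of x n] by (cases "a n x = 0") (auto simp: ell_mult_emb_right ell_mult_emb_left)
  qed
  then show "a \<in> commutant1 \<sigma>" using a by (simp add: commutant1_def)
next
  assume a: "a \<in> commutant1 \<sigma>"
  have "x \<in> Fix \<sigma> n" if nz: "a n x \<noteq> 0" for n x
  proof (rule ccontr)
    assume "x \<notin> Fix \<sigma> n"
    then have "ipow \<sigma> (- n) x \<noteq> x" using Fix_uminus_iff[of x n] by (simp add: Fix_def)
    then have "closed {x}" "closed {ipow \<sigma> (- n) x}" "{x} \<inter> {ipow \<sigma> (- n) x} = {}" by auto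
    then obtain f where f: "f \<in> CX" "\<And>y. y \<in> {x} \<Longrightarrow> f y = 0" "\<And>y. y \<in> {ipow \<sigma> (- n) x} \<Longrightarrow> f y = 1"
      by (rule urysohn_complex[OF compact_UNIV]) blast
    then have "ell_mult \<sigma> a (emb f) n x = ell_mult \<sigma> (emb f) a n x"
      using a by (simp add: commutant1_def)
    then show False using f nz by (simp add: ell_mult_emb_right ell_mult_emb_left)
  qed
  then show "a \<in> ell1 \<and> (\<forall>n x. a n x \<noteq> 0 \<longrightarrow> x \<in> Fix \<sigma> n)"
    using a by (auto simp: commutant1_def)
qed

lemma commutant1_ell1: "a \<in> commutant1 \<sigma> \<Longrightarrow> a \<in> ell1"
  by (simp add: commutant1_iff)

lemma commutant1_Fix: "a \<in> commutant1 \<sigma> \<Longrightarrow> a n x \<noteq> 0 \<Longrightarrow> x \<in> Fix \<sigma> n"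
  by (simp add: commutant1_iff)

lemma commutant1_CX: "a \<in> commutant1 \<sigma> \<Longrightarrow> a k \<in> CX"
  by (simp add: commutant1_ell1 ell1_CX)

lemma commutant1_interior_Fix:
  assumes "a \<in> commutant1 \<sigma>" "a k x \<noteq> 0"
  shows "x \<in> interior (Fix \<sigma> k)"
proof -
  have "{y. a k y \<noteq> 0} \<subseteq> interior (Fix \<sigma> k)"
    using open_nonzero_CX[OF commutant1_CX[OF assms(1)]] commutant1_Fix[OF assms(1)]
    by (intro interior_maximal) auto
  then show ?thesis using assms(2) by auto
qed

lemma
  assumes "f \<in> CX" "\<And>x. f x \<noteq> 0 \<Longrightarrow> x \<in> Fix \<sigma> k"
  shows monomial_in_commutant1: "monomial k f \<in> commutant1 \<sigma>"
    and ell_norm_monomial_le: "ell_norm (monomial k f) \<le> supnorm f"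
proof -
  have bound: "monomial k f j \<in> CX" "cmod (monomial k f j x) \<le> (if j = k then supnorm f else 0)" for j x
    using assms(1) norm_le_supnorm[OF compact_UNIV assms(1)] by (auto simp: monomial_def)
  have summable: "(\<lambda>j. if j = k then supnorm f else 0) summable_on UNIV"
    by (rule summable_on_single[where n=k]) simp
  show "monomial k f \<in> commutant1 \<sigma>"
    using ell1_dominated[OF bound summable] assms(2) by (auto simp: commutant1_iff monomial_def)
  show "ell_norm (monomial k f) \<le> supnorm f"
    using ell_norm_le_dominating[OF bound summable] by (subst (asm) infsum_eq_single[where n=k]) auto
qed

lemma emb_in_commutant1: "f \<in> CX \<Longrightarrow> emb f \<in> commutant1 \<sigma>"
  unfolding emb_eq_monomial by (rule monomial_in_commutant1) (auto simp: Fix_def)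

lemma ell_one_in_commutant1: "ell_one \<in> commutant1 \<sigma>"
  unfolding ell_one_def by (rule emb_in_commutant1) simp

lemma ell_mult_one: "ell_mult \<sigma> ell_one a = a"
  by (simp add: ell_one_def ell_mult_emb_left)

lemma monomial_component_in_commutant1: "a \<in> commutant1 \<sigma> \<Longrightarrow> monomial k (a k) \<in> commutant1 \<sigma>"
  by (rule monomial_in_commutant1) (auto intro: commutant1_CX commutant1_Fix)

lemma commutant1_add:
  assumes a: "a \<in> commutant1 \<sigma>" and b: "b \<in> commutant1 \<sigma>"
  shows "ell_add a b \<in> commutant1 \<sigma>"
proof -
  have "ell_add a b \<in> ell1"
  proof (rule ell1_dominated)
    show "ell_add a b k \<in> CX" for k
      using commutant1_CX[OF a] commutant1_CX[OF b] by (simp add: ell_add_def CX_add)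
    show "cmod (ell_add a b k x) \<le> supnorm (a k) + supnorm (b k)" for k x
      using ell1_norm_le_supnorm[OF commutant1_ell1[OF a], of k x]
        ell1_norm_le_supnorm[OF commutant1_ell1[OF b], of k x] norm_triangle_ineq[of "a k x" "b k x"]
      by (simp add: ell_add_def)
    show "(\<lambda>k. supnorm (a k) + supnorm (b k)) summable_on UNIV"
      by (intro summable_on_add ell1_summable commutant1_ell1 a b)
  qed
  moreover have "ell_add a b n x \<noteq> 0 \<Longrightarrow> x \<in> Fix \<sigma> n" for n x
    using commutant1_Fix[OF a, of n x] commutant1_Fix[OF b, of n x] by (cases "a n x = 0") (auto simp: ell_add_def)
  ultimately show ?thesis by (simp add: commutant1_iff)
qed

lemma
  assumes a: "a \<in> commutant1 \<sigma>"
  shows commutant1_smult: "ell_smult c a \<in> commutant1 \<sigma>"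
    and ell_norm_smult_le: "ell_norm (ell_smult c a) \<le> cmod c * ell_norm a"
proof -
  have bound: "ell_smult c a k \<in> CX" "cmod (ell_smult c a k x) \<le> cmod c * supnorm (a k)" for k x
    using commutant1_CX[OF a] ell1_norm_le_supnorm[OF commutant1_ell1[OF a], of k x]
    by (auto simp: ell_smult_def CX_cmult norm_mult mult_left_mono)
  have summable: "(\<lambda>k. cmod c * supnorm (a k)) summable_on UNIV"
    by (intro summable_on_cmult_right ell1_summable commutant1_ell1 a)
  show "ell_smult c a \<in> commutant1 \<sigma>"
    using ell1_dominated[OF bound summable] commutant1_Fix[OF a] by (auto simp: commutant1_iff ell_smult_def)
  have "infsum (\<lambda>k. cmod c * supnorm (a k)) UNIV = cmod c * ell_norm a"
    unfolding ell_norm_def by (intro infsum_cmult_right ell1_summable commutant1_ell1 a)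
  then show "ell_norm (ell_smult c a) \<le> cmod c * ell_norm a"
    using ell_norm_le_dominating[OF bound summable] by simp
qed

lemma
  assumes a: "a \<in> commutant1 \<sigma>"
  shows commutant1_truncate: "ell_truncate F a \<in> commutant1 \<sigma>"
    and ell_norm_truncate_le: "ell_norm (ell_truncate F a) \<le> infsum (\<lambda>k. supnorm (a k)) F"
proof -
  have bound: "ell_truncate F a k \<in> CX" "cmod (ell_truncate F a k x) \<le> (if k \<in> F then supnorm (a k) else 0)" for k x
    using commutant1_CX[OF a] ell1_norm_le_supnorm[OF commutant1_ell1[OF a], of k x]
    by (auto simp: ell_truncate_def)
  have summable: "(\<lambda>k. if k \<in> F then supnorm (a k) else 0) summable_on UNIV"
    by (rule summable_on_comparison_test[OF ell1_summable[OF commutant1_ell1[OF a]]])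
      (auto simp: ell1_supnorm_nonneg[OF commutant1_ell1[OF a]])
  show "ell_truncate F a \<in> commutant1 \<sigma>"
    using ell1_dominated[OF bound summable] commutant1_Fix[OF a] by (auto simp: commutant1_iff ell_truncate_def)
  have "infsum (\<lambda>k. if k \<in> F then supnorm (a k) else 0) UNIV = infsum (\<lambda>k. supnorm (a k)) F"
    by (rule infsum_cong_neutral) auto
  then show "ell_norm (ell_truncate F a) \<le> infsum (\<lambda>k. supnorm (a k)) F"
    using ell_norm_le_dominating[OF bound summable] by simp
qed

lemma commutant1_star:
  assumes a: "a \<in> commutant1 \<sigma>"
  shows "ell_star \<sigma> a \<in> commutant1 \<sigma>"
proof -
  have "ell_star \<sigma> a \<in> ell1"
  proof (rule ell1_dominated)
    show "ell_star \<sigma> a k \<in> CX" for k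
      unfolding ell_star_def by (intro CX_cnj CX_ipow commutant1_CX[OF a])
    show "cmod (ell_star \<sigma> a k x) \<le> supnorm (a (- k))" for k x
      using ell1_norm_le_supnorm[OF commutant1_ell1[OF a]] by (simp add: ell_star_def)
    have "(\<lambda>k. supnorm (a k)) summable_on uminus ` UNIV"
      using ell1_summable[OF commutant1_ell1[OF a]] by (simp add: surj_def)
    then show "(\<lambda>k. supnorm (a (- k))) summable_on UNIV"
      by (subst (asm) summable_on_reindex) (auto simp: o_def)
  qed
  moreover have "x \<in> Fix \<sigma> n" if "ell_star \<sigma> a n x \<noteq> 0" for n x
  proof -
    have "ipow \<sigma> (- n) x \<in> Fix \<sigma> (- n)"
      using that commutant1_Fix[OF a] by (simp add: ell_star_def)
    then have "ipow \<sigma> (- n) x = x"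
      using ipow_cancel_uminus[of n "ipow \<sigma> (- n) x"] by (simp add: Fix_def)
    then show ?thesis using Fix_uminus_iff by (auto simp: Fix_def)
  qed
  ultimately show ?thesis by (simp add: commutant1_iff)
qed

lemma ell_mult_Fix:
  assumes a: "a \<in> commutant1 \<sigma>" and b: "b \<in> commutant1 \<sigma>" and nz: "ell_mult \<sigma> a b n x \<noteq> 0"
  shows "x \<in> Fix \<sigma> n"
proof -
  obtain k where k: "a k x \<noteq> 0" "b (n - k) (ipow \<sigma> (- k) x) \<noteq> 0"
    using infsum_nonzero_witness[OF nz[unfolded ell_mult_def]] by auto
  have "x \<in> Fix \<sigma> k" by (rule commutant1_Fix[OF a k(1)])
  moreover from this have "x \<in> Fix \<sigma> (n - k)"
    using k(2) by (intro commutant1_Fix[OF b]) (simp add: ipow_uminus_Fix)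
  ultimately show ?thesis using Fix_add[of x k "n - k"] by simp
qed

lemma
  assumes a: "a \<in> commutant1 \<sigma>" and b: "b \<in> commutant1 \<sigma>"
  shows commutant1_mult: "ell_mult \<sigma> a b \<in> commutant1 \<sigma>"
    and ell_norm_mult_le: "ell_norm (ell_mult \<sigma> a b) \<le> ell_norm a * ell_norm b"
proof -
  have "(\<lambda>k. norm (supnorm (a k))) summable_on UNIV" "(\<lambda>k. norm (supnorm (b k))) summable_on UNIV"
    using a b by (simp_all add: commutant1_ell1 ell1_summable ell1_supnorm_nonneg)
  note cauchy = cauchy_product_int[OF this]
  have term_bound: "cmod (a k x * b (n - k) (ipow \<sigma> (- k) x)) \<le> supnorm (a k) * supnorm (b (n - k))" for k n x
    using a b by (simp add: norm_mult mult_mono ell1_norm_le_supnorm ell1_supnorm_nonneg commutant1_ell1)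
  have "continuous_on UNIV (\<lambda>x. a k x * b (n - k) (ipow \<sigma> (- k) x))" for k n
    using CX_mult[OF commutant1_CX[OF a] CX_ipow[OF commutant1_CX[OF b]]] by (simp add: CX_def)
  then have cont: "ell_mult \<sigma> a b n \<in> CX" for n
    unfolding ell_mult_def CX_def mem_Collect_eq by (rule continuous_on_infsum_dominated[OF _ term_bound cauchy(1)])
  have bound: "cmod (ell_mult \<sigma> a b n x) \<le> infsum (\<lambda>k. supnorm (a k) * supnorm (b (n - k))) UNIV" for n x
    unfolding ell_mult_def by (rule norm_infsum_le_dominating[OF cauchy(1) term_bound])
  show "ell_mult \<sigma> a b \<in> commutant1 \<sigma>"
    using ell1_dominated[OF cont bound cauchy(2)] ell_mult_Fix[OF a b] by (simp add: commutant1_iff)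
  show "ell_norm (ell_mult \<sigma> a b) \<le> ell_norm a * ell_norm b"
    using ell_norm_le_dominating[OF cont bound cauchy(2)] cauchy(3) by (simp add: ell_norm_def)
qed

lemma
  assumes "a \<in> commutant1 \<sigma>"
  shows commutant1_power: "ell_power \<sigma> a m \<in> commutant1 \<sigma>"
    and ell_norm_power_le: "ell_norm (ell_power \<sigma> a m) \<le> ell_norm a ^ m"
proof (induction m)
  case 0
  have "ell_norm (ell_one :: int \<Rightarrow> 'a \<Rightarrow> complex) \<le> supnorm (\<lambda>_::'a. 1::complex)"
    unfolding ell_one_def emb_eq_monomial by (rule ell_norm_monomial_le) (auto simp: Fix_def)
  also have "\<dots> \<le> 1" by (rule supnorm_le) simp
  finally show "ell_power \<sigma> a 0 \<in> commutant1 \<sigma>" "ell_norm (ell_power \<sigma> a 0) \<le> ell_norm a ^ 0"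
    by (simp_all add: ell_power_0 ell_one_in_commutant1)
next
  case (Suc m)
  have "ell_norm a * ell_norm (ell_power \<sigma> a m) \<le> ell_norm a * ell_norm a ^ m"
    using Suc.IH(2) ell_norm_nonneg[OF commutant1_ell1[OF assms]] by (rule mult_left_mono)
  then show "ell_power \<sigma> a (Suc m) \<in> commutant1 \<sigma>" "ell_norm (ell_power \<sigma> a (Suc m)) \<le> ell_norm a ^ Suc m"
    using commutant1_mult[OF assms Suc.IH(1)] ell_norm_mult_le[OF assms Suc.IH(1)] by (simp_all add: ell_power_Suc)
qed

lemma commutant1_infsum:
  fixes P :: "'i \<Rightarrow> int \<Rightarrow> 'a \<Rightarrow> complex"
  assumes P: "\<And>m. P m \<in> commutant1 \<sigma>" and summable: "(\<lambda>m. ell_norm (P m)) summable_on UNIV"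
  shows "(\<lambda>n x. infsum (\<lambda>m. P m n x) UNIV) \<in> commutant1 \<sigma>"
proof -
  have P_ell1: "P m \<in> ell1" for m by (rule commutant1_ell1[OF P])
  define W where "W = (\<lambda>(m, n). supnorm (P m n))"
  have W_nonneg: "0 \<le> W (m, n)" for m n by (simp add: W_def ell1_supnorm_nonneg[OF P_ell1])
  have W_le: "W (m, n) \<le> ell_norm (P m)" for m n by (simp add: W_def supnorm_le_ell_norm[OF P_ell1])
  have "W summable_on Sigma UNIV (\<lambda>_. UNIV)"
  proof (rule summable_on_SigmaI)
    show "((\<lambda>n. W (m, n)) has_sum ell_norm (P m)) UNIV" for m
      using has_sum_infsum[OF ell1_summable[OF P_ell1]] by (simp add: W_def ell_norm_def)
  qed (use summable W_nonneg in auto)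
  then have "(\<lambda>(n, m). W (m, n)) summable_on Sigma UNIV (\<lambda>_. UNIV)"
    by (subst (asm) summable_on_swap) simp
  moreover have W_col: "(\<lambda>m. W (m, n)) summable_on UNIV" for n
    by (rule summable_on_comparison_test[OF summable]) (use W_le W_nonneg in auto)
  ultimately have W_rows: "(\<lambda>n. infsum (\<lambda>m. W (m, n)) UNIV) summable_on UNIV"
    using summable_on_SigmaD[of "\<lambda>(n, m). W (m, n)" UNIV "\<lambda>_. UNIV"] by simp
  have pointwise: "cmod (P m n x) \<le> W (m, n)" for m n x
    by (simp add: W_def ell1_norm_le_supnorm[OF P_ell1])
  have "continuous_on UNIV (\<lambda>x. infsum (\<lambda>m. P m n x) UNIV)" for n
    using commutant1_CX[OF P] by (intro continuous_on_infsum_dominated[OF _ _ summable])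
      (auto simp: CX_def intro: order_trans[OF pointwise W_le])
  then have "(\<lambda>n x. infsum (\<lambda>m. P m n x) UNIV) \<in> ell1"
    by (intro ell1_dominated[OF _ _ W_rows]) (auto simp: CX_def intro: norm_infsum_le_dominating[OF W_col pointwise])
  moreover have "x \<in> Fix \<sigma> n" if "infsum (\<lambda>m. P m n x) UNIV \<noteq> 0" for n x
    using infsum_nonzero_witness[OF that] commutant1_Fix[OF P] by blast
  ultimately show ?thesis by (simp add: commutant1_iff)
qed

lemma norm_ell_power_le: "a \<in> commutant1 \<sigma> \<Longrightarrow> cmod (ell_power \<sigma> a m n x) \<le> ell_norm a ^ m"
  using ell1_norm_le_ell_norm[OF commutant1_ell1[OF commutant1_power], of a m n x] ell_norm_power_le[of a m]
  by linarith

lemma ell_mult_infsum_power: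
  assumes a: "a \<in> commutant1 \<sigma>" and small: "ell_norm a < 1"
  shows "ell_mult \<sigma> a (\<lambda>n x. \<Sum>\<^sub>\<infinity>m. ell_power \<sigma> a m n x) n x = (\<Sum>\<^sub>\<infinity>m. ell_power \<sigma> a (Suc m) n x)"
proof -
  define y where "y = (\<lambda>k. ipow \<sigma> (- k) x)"
  have a_ell1: "a \<in> ell1" by (rule commutant1_ell1[OF a])
  have "(\<lambda>(k, m). supnorm (a k) * ell_norm a ^ m) summable_on UNIV"
    using ell1_summable[OF a_ell1] ell1_supnorm_nonneg[OF a_ell1] ell_norm_nonneg[OF a_ell1]
      summable_on_geometric[OF ell_norm_nonneg[OF a_ell1] small]
    by (intro summable_on_product_nonneg) auto
  then have "(\<lambda>km. norm ((\<lambda>(k, m). a k x * ell_power \<sigma> a m (n - k) (y k)) km)) summable_on UNIV"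
    by (rule summable_on_comparison_test)
      (auto simp: norm_mult ell1_supnorm_nonneg[OF a_ell1] intro!: mult_mono ell1_norm_le_supnorm a_ell1 norm_ell_power_le a)
  then have double: "(\<lambda>(k, m). a k x * ell_power \<sigma> a m (n - k) (y k)) summable_on UNIV \<times> UNIV"
    by (simp add: abs_summable_summable)
  have "ell_mult \<sigma> a (\<lambda>n x. \<Sum>\<^sub>\<infinity>m. ell_power \<sigma> a m n x) n x
      = (\<Sum>\<^sub>\<infinity>k. \<Sum>\<^sub>\<infinity>m. a k x * ell_power \<sigma> a m (n - k) (y k))"
    unfolding ell_mult_def y_def by (simp add: infsum_cmult_right')
  also have "\<dots> = (\<Sum>\<^sub>\<infinity>m. \<Sum>\<^sub>\<infinity>k. a k x * ell_power \<sigma> a m (n - k) (y k))"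
    by (rule infsum_swap_banach[OF double])
  also have "\<dots> = (\<Sum>\<^sub>\<infinity>m. ell_power \<sigma> a (Suc m) n x)"
    by (simp add: ell_power_Suc ell_mult_def y_def)
  finally show ?thesis .
qed

text \<open>The Neumann series \<open>b = \<Sum>\<^sub>m a\<^sup>m\<close> solves \<open>b = 1 + a b\<close>.\<close>
lemma neumann_series:
  assumes a: "a \<in> commutant1 \<sigma>" and small: "ell_norm a < 1"
  shows "\<exists>b\<in>commutant1 \<sigma>. ell_add ell_one (ell_mult \<sigma> a b) = b"
proof -
  have geometric: "(\<lambda>m. ell_norm a ^ m) summable_on UNIV"
    by (rule summable_on_geometric[OF ell_norm_nonneg[OF commutant1_ell1[OF a]] small])
  define b where "b = (\<lambda>n x. \<Sum>\<^sub>\<infinity>m. ell_power \<sigma> a m n x)"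
  have "b \<in> commutant1 \<sigma>" unfolding b_def
  proof (rule commutant1_infsum[OF commutant1_power[OF a]])
    show "(\<lambda>m. ell_norm (ell_power \<sigma> a m)) summable_on UNIV"
      by (rule summable_on_comparison_test[OF geometric])
        (use ell_norm_power_le[OF a] ell_norm_nonneg[OF commutant1_ell1[OF commutant1_power[OF a]]] in auto)
  qed
  moreover have "ell_mult \<sigma> a b n x = b n x - ell_one n x" for n x
  proof -
    have "(\<lambda>m. ell_power \<sigma> a m n x) summable_on UNIV"
      by (rule dominated_summable_on[OF geometric norm_ell_power_le[OF a]])
    from infsum_Suc_shift[OF this] show ?thesis
      using ell_mult_infsum_power[OF a small, of n x] by (simp add: b_def ell_power_0)
  qed
  ultimately show ?thesis by (intro bexI[of _ b]) (auto simp: ell_add_def)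
qed

section \<open>Characters of \<open>C(X)'\<^sub>1\<close>\<close>

lemma DeltaA_iff:
  "\<omega> \<in> DeltaA \<sigma> \<longleftrightarrow> \<omega> \<in> extensional (commutant1 \<sigma>) \<and> is_character (commutant1 \<sigma>) ell_add (ell_mult \<sigma>) ell_smult \<omega>"
  by (simp add: DeltaA_def char_space_def)

lemma
  assumes "\<omega> \<in> DeltaA \<sigma>" "a \<in> commutant1 \<sigma>" "b \<in> commutant1 \<sigma>"
  shows character_add: "\<omega> (ell_add a b) = \<omega> a + \<omega> b"
    and character_mult: "\<omega> (ell_mult \<sigma> a b) = \<omega> a * \<omega> b"
  using assms by (simp_all add: DeltaA_iff is_character_def)

lemma character_smult: "\<omega> \<in> DeltaA \<sigma> \<Longrightarrow> a \<in> commutant1 \<sigma> \<Longrightarrow> \<omega> (ell_smult c a) = c * \<omega> a"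
  by (simp add: DeltaA_iff is_character_def)

lemma character_one:
  assumes "\<omega> \<in> DeltaA \<sigma>" shows "\<omega> ell_one = 1"
proof -
  obtain a where a: "a \<in> commutant1 \<sigma>" "\<omega> a \<noteq> 0" using assms by (auto simp: DeltaA_iff is_character_def)
  have "\<omega> a = \<omega> ell_one * \<omega> a"
    using character_mult[OF assms ell_one_in_commutant1 a(1)] by (simp add: ell_mult_one)
  then show ?thesis using a(2) by simp
qed

lemma character_zero:
  assumes "\<omega> \<in> DeltaA \<sigma>" shows "\<omega> (\<lambda>k x. 0) = 0"
proof -
  have "(\<lambda>k x. 0) = ell_smult 0 (ell_one :: int \<Rightarrow> 'a \<Rightarrow> complex)" by (auto simp: ell_smult_def)
  then show ?thesis using character_smult[OF assms ell_one_in_commutant1, of 0] by simp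
qed

text \<open>If \<open>|\<omega> a| > \<parallel>a\<parallel>\<close>, then \<open>a' = a / \<omega> a\<close> has \<open>\<parallel>a'\<parallel> < 1\<close> and \<open>\<omega> a' = 1\<close>, and the Neumann series
  \<open>b = 1 + a' b\<close> would give \<open>\<omega> b = 1 + \<omega> b\<close>.\<close>
lemma norm_character_le:
  assumes \<omega>: "\<omega> \<in> DeltaA \<sigma>" and a: "a \<in> commutant1 \<sigma>"
  shows "cmod (\<omega> a) \<le> ell_norm a"
proof (rule ccontr)
  assume "\<not> ?thesis"
  then have gt: "ell_norm a < cmod (\<omega> a)" by simp
  then have nz: "\<omega> a \<noteq> 0" using ell_norm_nonneg[OF commutant1_ell1[OF a]] by auto
  define a' where "a' = ell_smult (1 / \<omega> a) a"
  have a': "a' \<in> commutant1 \<sigma>" "\<omega> a' = 1"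
    using commutant1_smult[OF a] character_smult[OF \<omega> a] nz by (simp_all add: a'_def)
  have "ell_norm a' \<le> cmod (1 / \<omega> a) * ell_norm a"
    unfolding a'_def by (rule ell_norm_smult_le[OF a])
  also have "\<dots> < 1" using gt nz by (simp add: norm_divide field_simps)
  finally obtain b where b: "b \<in> commutant1 \<sigma>" "ell_add ell_one (ell_mult \<sigma> a' b) = b"
    using neumann_series[OF a'(1)] by blast
  have "\<omega> b = \<omega> ell_one + \<omega> a' * \<omega> b"
    using character_add[OF \<omega> ell_one_in_commutant1 commutant1_mult[OF a'(1) b(1)]]
      character_mult[OF \<omega> a'(1) b(1)] b(2) by simp
  then show False using character_one[OF \<omega>] a'(2) by simp
qed

lemma character_truncate_finite:
  assumes \<omega>: "\<omega> \<in> DeltaA \<sigma>" and a: "a \<in> commutant1 \<sigma>" and "finite F"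
  shows "\<omega> (ell_truncate F a) = (\<Sum>k\<in>F. \<omega> (monomial k (a k)))"
  using \<open>finite F\<close>
proof (induction F rule: finite_induct)
  case empty
  then show ?case using character_zero[OF \<omega>] by (simp add: ell_truncate_empty)
next
  case (insert k F)
  then show ?case
    using character_add[OF \<omega> monomial_component_in_commutant1[OF a] commutant1_truncate[OF a]]
    by (simp add: ell_truncate_insert)
qed

lemma has_sum_character_monomials:
  assumes \<omega>: "\<omega> \<in> DeltaA \<sigma>" and a: "a \<in> commutant1 \<sigma>"
  shows "((\<lambda>k. \<omega> (monomial k (a k))) has_sum \<omega> a) UNIV"
proof -
  have "\<forall>\<^sub>F S in finite_subsets_at_top UNIV.
      norm (\<omega> a - (\<Sum>k\<in>S. \<omega> (monomial k (a k)))) \<le> infsum (\<lambda>k. supnorm (a k)) (- S)"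
  proof (rule eventually_finite_subsets_at_top_weakI)
    fix S :: "int set" assume S: "finite S"
    have "\<omega> a - (\<Sum>k\<in>S. \<omega> (monomial k (a k))) = \<omega> (ell_truncate (- S) a)"
      using character_add[OF \<omega> commutant1_truncate[OF a] commutant1_truncate[OF a], of S "- S"]
        character_truncate_finite[OF \<omega> a S] by (simp add: ell_truncate_Compl)
    moreover have "cmod (\<omega> (ell_truncate (- S) a)) \<le> ell_norm (ell_truncate (- S) a)"
      by (rule norm_character_le[OF \<omega> commutant1_truncate[OF a]])
    ultimately show "norm (\<omega> a - (\<Sum>k\<in>S. \<omega> (monomial k (a k)))) \<le> infsum (\<lambda>k. supnorm (a k)) (- S)"
      using ell_norm_truncate_le[OF a, of "- S"] by simp
  qed
  then have "((\<lambda>S. \<omega> a - (\<Sum>k\<in>S. \<omega> (monomial k (a k)))) \<longlongrightarrow> 0) (finite_subsets_at_top UNIV)"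
    by (rule Lim_null_comparison) (rule tendsto_infsum_Compl[OF ell1_summable[OF commutant1_ell1[OF a]]])
  then have "((\<lambda>S. \<omega> a - (\<omega> a - (\<Sum>k\<in>S. \<omega> (monomial k (a k))))) \<longlongrightarrow> \<omega> a - 0) (finite_subsets_at_top UNIV)"
    by (intro tendsto_diff tendsto_const)
  then show ?thesis by (simp add: has_sum_def)
qed

lemma restr_char_in_DeltaCX:
  assumes \<omega>: "\<omega> \<in> DeltaA \<sigma>"
  shows "restr_char \<omega> \<in> DeltaCX"
  unfolding DeltaCX_iff restr_char_def
proof (intro conjI ballI allI)
  show "restrict (\<lambda>f. \<omega> (emb f)) CX \<in> extensional CX" by simp
  fix f g :: "'a \<Rightarrow> complex" assume f: "f \<in> CX" and g: "g \<in> CX"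
  show "restrict (\<lambda>f. \<omega> (emb f)) CX (\<lambda>x. f x + g x)
      = restrict (\<lambda>f. \<omega> (emb f)) CX f + restrict (\<lambda>f. \<omega> (emb f)) CX g"
    using f g CX_add[OF f g] character_add[OF \<omega> emb_in_commutant1[OF f] emb_in_commutant1[OF g]]
    by (simp add: emb_add)
  show "restrict (\<lambda>f. \<omega> (emb f)) CX (\<lambda>x. f x * g x)
      = restrict (\<lambda>f. \<omega> (emb f)) CX f * restrict (\<lambda>f. \<omega> (emb f)) CX g"
    using f g CX_mult[OF f g] character_mult[OF \<omega> emb_in_commutant1[OF f] emb_in_commutant1[OF g]]
    by (simp add: emb_mult)
next
  fix c and f :: "'a \<Rightarrow> complex" assume f: "f \<in> CX"
  show "restrict (\<lambda>f. \<omega> (emb f)) CX (\<lambda>x. c * f x) = c * restrict (\<lambda>f. \<omega> (emb f)) CX f"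
    using f CX_cmult[OF f] character_smult[OF \<omega> emb_in_commutant1[OF f]] by (simp add: emb_cmult)
next
  show "\<exists>f\<in>CX. restrict (\<lambda>f. \<omega> (emb f)) CX (f :: 'a \<Rightarrow> complex) \<noteq> 0"
    using character_one[OF \<omega>] by (intro bexI[of _ "\<lambda>_. 1"]) (simp_all add: ell_one_def)
qed

lemma character_point:
  assumes \<omega>: "\<omega> \<in> DeltaA \<sigma>"
  obtains x where "\<And>f. f \<in> CX \<Longrightarrow> \<omega> (emb f) = f x"
proof -
  obtain x where "restr_char \<omega> = restrict (\<lambda>f. f x) CX"
    using DeltaCX_point_eval[OF compact_UNIV restr_char_in_DeltaCX[OF \<omega>]] by blast
  then have "\<omega> (emb f) = f x" if "f \<in> CX" for f
    using that unfolding restr_char_def by (metis restrict_apply')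
  then show ?thesis by (rule that)
qed

lemma interior_Fix_not_PerInt:
  assumes "x \<notin> PerInt \<sigma>" "k \<noteq> 0"
  shows "x \<notin> interior (Fix \<sigma> k)"
proof
  assume x: "x \<in> interior (Fix \<sigma> k)"
  have "Fix \<sigma> (int (nat \<bar>k\<bar>)) = Fix \<sigma> k"
  proof (cases "0 \<le> k")
    case False
    then have "int (nat \<bar>k\<bar>) = - k" by simp
    then show ?thesis by (auto simp: Fix_uminus_iff)
  qed simp
  moreover have "nat \<bar>k\<bar> \<in> {1..}" using assms(2) by simp
  ultimately have "x \<in> PerInt \<sigma>"
    using UN_I[of "nat \<bar>k\<bar>" "{1..}" x "\<lambda>q. interior (Fix \<sigma> (int q))"] x by (simp add: PerInt_def)
  with assms(1) show False ..
qed

lemma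
  assumes "x \<in> PerInt \<sigma>"
  shows minper_pos: "1 \<le> minper \<sigma> x"
    and interior_Fix_minper: "x \<in> interior (Fix \<sigma> (int (minper \<sigma> x)))"
proof -
  obtain q where q: "1 \<le> q" "x \<in> interior (Fix \<sigma> (int q))"
    using assms unfolding PerInt_def by auto
  have "1 \<le> minper \<sigma> x \<and> x \<in> interior (Fix \<sigma> (int (minper \<sigma> x)))"
    unfolding minper_def by (rule LeastI[of _ q]) (use q in auto)
  then show "1 \<le> minper \<sigma> x" "x \<in> interior (Fix \<sigma> (int (minper \<sigma> x)))" by auto
qed

lemma minper_le: "1 \<le> q \<Longrightarrow> x \<in> interior (Fix \<sigma> (int q)) \<Longrightarrow> minper \<sigma> x \<le> q"
  unfolding minper_def by (rule Least_le) auto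

text \<open>\<open>Fix\<^sub>k \<inter> Fix\<^sub>n \<subseteq> Fix\<^bsub>gcd k n\<^esub>\<close>, so minimality of \<open>n\<close> forces \<open>gcd k n = n\<close>.\<close>
lemma minper_dvd:
  assumes x: "x \<in> PerInt \<sigma>" and k: "x \<in> interior (Fix \<sigma> k)"
  shows "int (minper \<sigma> x) dvd k"
proof -
  define n where "n = minper \<sigma> x"
  define d where "d = gcd k (int n)"
  have n: "1 \<le> n" "x \<in> interior (Fix \<sigma> (int n))"
    using minper_pos[OF x] interior_Fix_minper[OF x] by (simp_all add: n_def)
  have d: "0 < d" "d dvd int n" using n(1) by (simp_all add: d_def)
  have "interior (Fix \<sigma> k \<inter> Fix \<sigma> (int n)) \<subseteq> interior (Fix \<sigma> d)"
    using Fix_gcd by (intro interior_mono) (auto simp: d_def)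
  then have "x \<in> interior (Fix \<sigma> (int (nat d)))" using k n(2) d(1) by auto
  then have "n \<le> nat d" unfolding n_def using d(1) by (intro minper_le) auto
  then have "d = int n" using d zdvd_imp_le[of d "int n"] n(1) by auto
  then show ?thesis using gcd_dvd1[of k "int n"] by (simp add: d_def n_def)
qed

lemma Fix_multiple_minper: "x \<in> PerInt \<sigma> \<Longrightarrow> x \<in> Fix \<sigma> (j * int (minper \<sigma> x))"
  using interior_Fix_minper interior_subset Fix_mult by blast

lemma commutant1_minper_dvd:
  "x \<in> PerInt \<sigma> \<Longrightarrow> a \<in> commutant1 \<sigma> \<Longrightarrow> a k x \<noteq> 0 \<Longrightarrow> int (minper \<sigma> x) dvd k"
  using minper_dvd commutant1_interior_Fix by blast

lemma commutant1_not_PerInt: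
  "x \<notin> PerInt \<sigma> \<Longrightarrow> a \<in> commutant1 \<sigma> \<Longrightarrow> k \<noteq> 0 \<Longrightarrow> a k x = 0"
  using interior_Fix_not_PerInt commutant1_interior_Fix by blast

lemma omega_x_in_DeltaA:
  assumes x: "x \<notin> PerInt \<sigma>"
  shows "omega_x \<sigma> x \<in> DeltaA \<sigma>"
  unfolding DeltaA_iff is_character_def
proof (intro conjI ballI allI)
  show "omega_x \<sigma> x \<in> extensional (commutant1 \<sigma>)" by (simp add: omega_x_def)
  fix a b assume a: "a \<in> commutant1 \<sigma>" and b: "b \<in> commutant1 \<sigma>"
  show "omega_x \<sigma> x (ell_add a b) = omega_x \<sigma> x a + omega_x \<sigma> x b"
    using a b commutant1_add[OF a b] by (simp add: omega_x_def ell_add_def)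
  have "ell_mult \<sigma> a b 0 x = a 0 x * b (0 - 0) (ipow \<sigma> (- 0) x)"
    unfolding ell_mult_def by (rule infsum_eq_single) (simp add: commutant1_not_PerInt[OF x a])
  then show "omega_x \<sigma> x (ell_mult \<sigma> a b) = omega_x \<sigma> x a * omega_x \<sigma> x b"
    using a b commutant1_mult[OF a b] by (simp add: omega_x_def)
next
  fix c a assume a: "a \<in> commutant1 \<sigma>"
  show "omega_x \<sigma> x (ell_smult c a) = c * omega_x \<sigma> x a"
    using a commutant1_smult[OF a] by (simp add: omega_x_def ell_smult_def)
next
  show "\<exists>a\<in>commutant1 \<sigma>. omega_x \<sigma> x a \<noteq> 0"
    using ell_one_in_commutant1 by (intro bexI[of _ ell_one]) (auto simp: omega_x_def ell_one_apply)
qed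

lemma abs_summable_omega_xc_terms:
  assumes a: "a \<in> commutant1 \<sigma>" and N: "N \<noteq> 0" and c: "cmod c = 1"
  shows "(\<lambda>j. norm (a (j * N) x * c powi j)) summable_on UNIV"
proof -
  have "(\<lambda>j. supnorm (a (j * N))) summable_on UNIV"
    by (rule summable_on_multiples[OF ell1_summable[OF commutant1_ell1[OF a]] N])
  then have "(\<lambda>j. norm (a (j * N) x)) summable_on UNIV"
    by (rule summable_on_comparison_test) (use ell1_norm_le_supnorm[OF commutant1_ell1[OF a]] in auto)
  then show ?thesis using c by (simp add: norm_mult norm_power_int)
qed

text \<open>Only coefficients of index divisible by the minimal period \<open>N\<close> are nonzero at \<open>x\<close>, and
  \<open>\<sigma>\<^sup>-\<^sup>i\<^sup>N\<close> fixes \<open>x\<close>.\<close>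
lemma ell_mult_apply_multiple_minper:
  assumes x: "x \<in> PerInt \<sigma>" and a: "a \<in> commutant1 \<sigma>"
  defines "N \<equiv> int (minper \<sigma> x)"
  shows "ell_mult \<sigma> a b (j * N) x = (\<Sum>\<^sub>\<infinity>i. a (i * N) x * b ((j - i) * N) x)"
proof -
  have "N \<noteq> 0" using minper_pos[OF x] by (simp add: N_def)
  have "ell_mult \<sigma> a b (j * N) x = (\<Sum>\<^sub>\<infinity>i. a (i * N) x * b (j * N - i * N) (ipow \<sigma> (- (i * N)) x))"
    unfolding ell_mult_def
    by (rule infsum_supported_on_multiples[OF _ \<open>N \<noteq> 0\<close>]) (use commutant1_minper_dvd[OF x a] in \<open>auto simp: N_def\<close>)
  then show ?thesis
    by (simp add: N_def left_diff_distrib ipow_uminus_Fix[OF Fix_multiple_minper[OF x]])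
qed

lemma omega_xc_mult:
  assumes x: "x \<in> PerInt \<sigma>" and c: "cmod c = 1" and a: "a \<in> commutant1 \<sigma>" and b: "b \<in> commutant1 \<sigma>"
  shows "omega_xc \<sigma> x c (ell_mult \<sigma> a b) = omega_xc \<sigma> x c a * omega_xc \<sigma> x c b"
proof -
  define N where "N = int (minper \<sigma> x)"
  have N: "N \<noteq> 0" using minper_pos[OF x] by (simp add: N_def)
  define \<alpha> where "\<alpha> = (\<lambda>i. a (i * N) x * c powi i)"
  define \<beta> where "\<beta> = (\<lambda>i. b (i * N) x * c powi i)"
  have summable: "(\<lambda>i. norm (\<alpha> i)) summable_on UNIV" "(\<lambda>i. norm (\<beta> i)) summable_on UNIV"
    unfolding \<alpha>_def \<beta>_def using abs_summable_omega_xc_terms[OF _ N c] a b by auto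
  have "ell_mult \<sigma> a b (j * N) x * c powi j = (\<Sum>\<^sub>\<infinity>i. \<alpha> i * \<beta> (j - i))" for j
  proof -
    have "\<alpha> i * \<beta> (j - i) = a (i * N) x * b ((j - i) * N) x * c powi j" for i
    proof -
      have "c \<noteq> 0" using c by auto
      then have "c powi j = c powi i * c powi (j - i)"
        using power_int_add[of c i "j - i"] by simp
      then show ?thesis by (simp add: \<alpha>_def \<beta>_def mult_ac)
    qed
    then show ?thesis
      by (simp add: ell_mult_apply_multiple_minper[OF x a, folded N_def] infsum_cmult_left')
  qed
  then have "omega_xc \<sigma> x c (ell_mult \<sigma> a b) = (\<Sum>\<^sub>\<infinity>j. \<Sum>\<^sub>\<infinity>i. \<alpha> i * \<beta> (j - i))"
    using commutant1_mult[OF a b] by (simp add: omega_xc_def N_def[symmetric])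
  also have "\<dots> = infsum \<alpha> UNIV * infsum \<beta> UNIV"
    by (rule cauchy_product_int(3)[OF summable])
  finally show ?thesis using a b by (simp add: omega_xc_def \<alpha>_def \<beta>_def N_def[symmetric])
qed

lemma omega_xc_in_DeltaA:
  assumes x: "x \<in> PerInt \<sigma>" and c: "cmod c = 1"
  shows "omega_xc \<sigma> x c \<in> DeltaA \<sigma>"
  unfolding DeltaA_iff is_character_def
proof (intro conjI ballI allI)
  define N where "N = int (minper \<sigma> x)"
  have N: "N \<noteq> 0" using minper_pos[OF x] by (simp add: N_def)
  have summable: "(\<lambda>j. a (j * N) x * c powi j) summable_on UNIV" if "a \<in> commutant1 \<sigma>" for a
    by (rule abs_summable_summable[OF abs_summable_omega_xc_terms[OF that N c]])
  show "omega_xc \<sigma> x c \<in> extensional (commutant1 \<sigma>)" by (simp add: omega_xc_def)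
  fix a b assume a: "a \<in> commutant1 \<sigma>" and b: "b \<in> commutant1 \<sigma>"
  show "omega_xc \<sigma> x c (ell_add a b) = omega_xc \<sigma> x c a + omega_xc \<sigma> x c b"
    using commutant1_add[OF a b] a b infsum_add[OF summable[OF a] summable[OF b]]
    by (simp add: omega_xc_def ell_add_def distrib_right N_def[symmetric])
  show "omega_xc \<sigma> x c (ell_mult \<sigma> a b) = omega_xc \<sigma> x c a * omega_xc \<sigma> x c b"
    by (rule omega_xc_mult[OF x c a b])
next
  fix d a assume a: "a \<in> commutant1 \<sigma>"
  show "omega_xc \<sigma> x c (ell_smult d a) = d * omega_xc \<sigma> x c a"
    using commutant1_smult[OF a] a infsum_cmult_right'[of d]
    by (simp add: omega_xc_def ell_smult_def mult.assoc)
next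
  have "omega_xc \<sigma> x c ell_one = (\<Sum>\<^sub>\<infinity>j. ell_one (j * int (minper \<sigma> x)) x * c powi j)"
    using ell_one_in_commutant1 by (simp add: omega_xc_def)
  also have "\<dots> = ell_one (0 * int (minper \<sigma> x)) x * c powi 0"
    by (rule infsum_eq_single) (use minper_pos[OF x] in \<open>simp add: ell_one_apply\<close>)
  finally show "\<exists>a\<in>commutant1 \<sigma>. omega_xc \<sigma> x c a \<noteq> 0"
    using ell_one_in_commutant1 by (intro bexI[of _ ell_one]) (simp_all add: ell_one_apply)
qed

lemma character_emb_mult:
  assumes \<omega>: "\<omega> \<in> DeltaA \<sigma>" and x: "\<And>f. f \<in> CX \<Longrightarrow> \<omega> (emb f) = f x"
    and g: "g \<in> CX" and b: "b \<in> commutant1 \<sigma>"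
  shows "\<omega> (ell_mult \<sigma> (emb g) b) = g x * \<omega> b"
  using character_mult[OF \<omega> emb_in_commutant1[OF g] b] x[OF g] by simp

text \<open>Multiplying by a cut-off \<open>g\<close> with \<open>g x = 1\<close> and \<open>|g| \<le> 1\<close>, supported where \<open>|f| < \<epsilon>\<close>,
  gives \<open>|\<omega> (f \<delta>\<^sup>k)| = |\<omega> (g f \<delta>\<^sup>k)| \<le> \<epsilon>\<close>.\<close>
lemma character_monomial_eq_0:
  assumes \<omega>: "\<omega> \<in> DeltaA \<sigma>" and x: "\<And>f. f \<in> CX \<Longrightarrow> \<omega> (emb f) = f x"
    and f: "f \<in> CX" "\<And>y. f y \<noteq> 0 \<Longrightarrow> y \<in> Fix \<sigma> k" and fx: "f x = 0"
  shows "\<omega> (monomial k f) = 0"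
proof -
  have "cmod (\<omega> (monomial k f)) \<le> 0 + e" if "e > 0" for e
  proof -
    define U where "U = {y. cmod (f y) < e}"
    have "open U"
      unfolding U_def using f(1) by (intro open_Collect_less continuous_intros) (auto simp: CX_def)
    then have "closed (- U)" "closed {x}" "- U \<inter> {x} = {}" using fx \<open>e > 0\<close> by (auto simp: U_def)
    then obtain g where g: "g \<in> CX" "\<And>y. cmod (g y) \<le> 1" "\<And>y. y \<in> - U \<Longrightarrow> g y = 0" "\<And>y. y \<in> {x} \<Longrightarrow> g y = 1"
      by (rule urysohn_complex[OF compact_UNIV]) blast
    have gf: "(\<lambda>y. g y * f y) \<in> CX" "\<And>y. g y * f y \<noteq> 0 \<Longrightarrow> y \<in> Fix \<sigma> k"
      using CX_mult[OF g(1) f(1)] f(2) by auto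
    have "\<omega> (monomial k f) = \<omega> (monomial k (\<lambda>y. g y * f y))"
      using character_emb_mult[OF \<omega> x g(1) monomial_in_commutant1[OF f]] g(4) by (simp add: monomial_mult_emb)
    also have "cmod \<dots> \<le> ell_norm (monomial k (\<lambda>y. g y * f y))"
      by (rule norm_character_le[OF \<omega> monomial_in_commutant1[OF gf]])
    also have "\<dots> \<le> supnorm (\<lambda>y. g y * f y)"
      by (rule ell_norm_monomial_le[OF gf])
    also have "\<dots> \<le> e"
    proof (rule supnorm_le)
      fix y
      show "cmod (g y * f y) \<le> e"
      proof (cases "y \<in> U")
        case True
        then have "cmod (f y) < e" by (simp add: U_def)
        moreover have "cmod (g y) * cmod (f y) \<le> cmod (f y)"
          by (rule mult_left_le_one_le) (use g(2) in auto)
        ultimately show ?thesis by (simp add: norm_mult)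
      qed (use g(3) \<open>e > 0\<close> in simp)
    qed
    finally show ?thesis by simp
  qed
  then show ?thesis using field_le_epsilon[of "cmod (\<omega> (monomial k f))" 0] by simp
qed

lemma character_monomial:
  assumes \<omega>: "\<omega> \<in> DeltaA \<sigma>" and x: "\<And>f. f \<in> CX \<Longrightarrow> \<omega> (emb f) = f x"
    and f: "f \<in> CX" "\<And>y. f y \<noteq> 0 \<Longrightarrow> y \<in> Fix \<sigma> k"
    and u: "u \<in> CX" "\<And>y. u y \<noteq> 0 \<Longrightarrow> y \<in> Fix \<sigma> k" "u x = 1"
  shows "\<omega> (monomial k f) = f x * \<omega> (monomial k u)"
proof -
  define h where "h = (\<lambda>y. f y - f x * u y)"
  have "h \<in> CX" using CX_add[OF f(1) CX_cmult[OF u(1), of "- f x"]] by (simp add: h_def)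
  moreover have "h y \<noteq> 0 \<Longrightarrow> y \<in> Fix \<sigma> k" for y
    using f(2)[of y] u(2)[of y] by (cases "f y = 0") (auto simp: h_def)
  moreover have "h x = 0" using u(3) by (simp add: h_def)
  ultimately have h: "h \<in> CX" "\<And>y. h y \<noteq> 0 \<Longrightarrow> y \<in> Fix \<sigma> k" "h x = 0" by blast+
  have "monomial k f = ell_add (monomial k h) (ell_smult (f x) (monomial k u))"
    by (auto simp: monomial_def ell_add_def ell_smult_def h_def)
  then show ?thesis
    using character_add[OF \<omega> monomial_in_commutant1[OF h(1,2)] commutant1_smult[OF monomial_in_commutant1[OF u(1,2)]]]
      character_smult[OF \<omega> monomial_in_commutant1[OF u(1,2)]] character_monomial_eq_0[OF \<omega> x h]
    by simp
qed

lemma character_not_PerInt: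
  assumes \<omega>: "\<omega> \<in> DeltaA \<sigma>" and x: "\<And>f. f \<in> CX \<Longrightarrow> \<omega> (emb f) = f x" and "x \<notin> PerInt \<sigma>"
  shows "\<omega> = omega_x \<sigma> x"
proof (rule extensionalityI[where A = "commutant1 \<sigma>"])
  show "\<omega> \<in> extensional (commutant1 \<sigma>)" using \<omega> by (simp add: DeltaA_iff)
  show "omega_x \<sigma> x \<in> extensional (commutant1 \<sigma>)" by (simp add: omega_x_def)
  fix a assume a: "a \<in> commutant1 \<sigma>"
  have "\<omega> (monomial k (a k)) = (if k = 0 then a 0 x else 0)" for k
  proof (cases "k = 0")
    case True
    then show ?thesis using x[OF commutant1_CX[OF a]] by (simp add: emb_eq_monomial)
  next
    case False
    then show ?thesis
      using character_monomial_eq_0[OF \<omega> x commutant1_CX[OF a] commutant1_Fix[OF a]]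
        commutant1_not_PerInt[OF \<open>x \<notin> PerInt \<sigma>\<close> a False] by simp
  qed
  then have "((\<lambda>k::int. if k = 0 then a 0 x else 0) has_sum \<omega> a) UNIV"
    using has_sum_character_monomials[OF \<omega> a] by simp
  then have "\<omega> a = (\<Sum>\<^sub>\<infinity>k::int. if k = 0 then a 0 x else 0)" by (rule infsumI[symmetric])
  also have "\<dots> = a 0 x" by (subst infsum_eq_single[where n = 0]) auto
  finally show "\<omega> a = omega_x \<sigma> x a" using a by (simp add: omega_x_def)
qed

lemma bump_PerInt:
  assumes "x \<in> PerInt \<sigma>"
  obtains u where "u \<in> CX" "u x = 1" "\<And>y. cmod (u y) \<le> 1" "\<And>y. u y \<noteq> 0 \<Longrightarrow> y \<in> Fix \<sigma> (int (minper \<sigma> x))"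
proof -
  let ?F = "interior (Fix \<sigma> (int (minper \<sigma> x)))"
  have "closed (- ?F)" "closed {x}" "- ?F \<inter> {x} = {}" using interior_Fix_minper[OF assms] by auto
  then obtain u where u: "u \<in> CX" "\<And>y. cmod (u y) \<le> 1" "\<And>y. y \<in> - ?F \<Longrightarrow> u y = 0" "\<And>y. y \<in> {x} \<Longrightarrow> u y = 1"
    by (rule urysohn_complex[OF compact_UNIV]) blast
  show ?thesis
  proof (rule that)
    show "u y \<noteq> 0 \<Longrightarrow> y \<in> Fix \<sigma> (int (minper \<sigma> x))" for y
      using u(3)[of y] interior_subset by blast
  qed (use u in auto)
qed

lemma character_bump_monomial_add:
  assumes \<omega>: "\<omega> \<in> DeltaA \<sigma>" and x: "\<And>f. f \<in> CX \<Longrightarrow> \<omega> (emb f) = f x" and xP: "x \<in> PerInt \<sigma>"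
    and u: "u \<in> CX" "u x = 1" "\<And>y. u y \<noteq> 0 \<Longrightarrow> y \<in> Fix \<sigma> (int (minper \<sigma> x))"
  defines "N \<equiv> int (minper \<sigma> x)"
  shows "\<omega> (monomial ((i + j) * N) u) = \<omega> (monomial (i * N) u) * \<omega> (monomial (j * N) u)"
proof -
  have u_Fix: "u y \<noteq> 0 \<Longrightarrow> y \<in> Fix \<sigma> (k * N)" for y k
    using u(3) Fix_mult by (simp add: N_def)
  define h where "h = (\<lambda>y. u y * u (ipow \<sigma> (- (i * N)) y))"
  have h: "h \<in> CX" "\<And>y. h y \<noteq> 0 \<Longrightarrow> y \<in> Fix \<sigma> ((i + j) * N)"
    using CX_mult[OF u(1) CX_ipow[OF u(1)]] u_Fix by (auto simp: h_def)
  have "h x = 1"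
    using u(2) ipow_uminus_Fix[OF Fix_multiple_minper[OF xP], of i] by (simp add: h_def N_def)
  have "\<omega> (monomial (i * N) u) * \<omega> (monomial (j * N) u) = \<omega> (monomial (i * N + j * N) h)"
    using character_mult[OF \<omega> monomial_in_commutant1[OF u(1) u_Fix] monomial_in_commutant1[OF u(1) u_Fix]]
    by (simp add: monomial_mult_monomial h_def)
  also have "\<dots> = \<omega> (monomial ((i + j) * N) u)"
    using character_monomial[OF \<omega> x h u(1) u_Fix u(2)] \<open>h x = 1\<close> by (simp add: distrib_right)
  finally show ?thesis by simp
qed

lemma character_eq_omega_xc:
  assumes \<omega>: "\<omega> \<in> DeltaA \<sigma>" and x: "\<And>f. f \<in> CX \<Longrightarrow> \<omega> (emb f) = f x" and xP: "x \<in> PerInt \<sigma>"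
    and u: "u \<in> CX" "u x = 1" "\<And>y. u y \<noteq> 0 \<Longrightarrow> y \<in> Fix \<sigma> (int (minper \<sigma> x))"
    and powers: "\<And>j. \<omega> (monomial (j * int (minper \<sigma> x)) u) = c powi j"
  shows "\<omega> = omega_xc \<sigma> x c"
proof (rule extensionalityI[where A = "commutant1 \<sigma>"])
  define N where "N = int (minper \<sigma> x)"
  have N: "N \<noteq> 0" using minper_pos[OF xP] by (simp add: N_def)
  show "\<omega> \<in> extensional (commutant1 \<sigma>)" using \<omega> by (simp add: DeltaA_iff)
  show "omega_xc \<sigma> x c \<in> extensional (commutant1 \<sigma>)" by (simp add: omega_xc_def)
  fix a assume a: "a \<in> commutant1 \<sigma>"
  have "\<omega> (monomial k (a k)) = (if N dvd k then a k x * c powi (k div N) else 0)" for k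
  proof (cases "N dvd k")
    case True
    then obtain j where k: "k = j * N" by (auto simp: dvd_def mult.commute)
    have "u y \<noteq> 0 \<Longrightarrow> y \<in> Fix \<sigma> (j * N)" for y
      using u(3) Fix_mult by (simp add: N_def)
    then show ?thesis
      using character_monomial[OF \<omega> x commutant1_CX[OF a] commutant1_Fix[OF a] u(1) _ u(2)] powers[of j] N
      by (simp add: k N_def)
  next
    case False
    then have "a k x = 0" using commutant1_minper_dvd[OF xP a] by (auto simp: N_def)
    then show ?thesis
      using False character_monomial_eq_0[OF \<omega> x commutant1_CX[OF a] commutant1_Fix[OF a]] by simp
  qed
  then have "((\<lambda>k. if N dvd k then a k x * c powi (k div N) else 0) has_sum \<omega> a) UNIV"
    using has_sum_character_monomials[OF \<omega> a] by simp
  then have "\<omega> a = (\<Sum>\<^sub>\<infinity>k. if N dvd k then a k x * c powi (k div N) else 0)"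
    by (rule infsumI[symmetric])
  also have "\<dots> = (\<Sum>\<^sub>\<infinity>j. if N dvd j * N then a (j * N) x * c powi (j * N div N) else 0)"
    by (rule infsum_supported_on_multiples[OF _ N]) (simp split: if_splits)
  also have "\<dots> = (\<Sum>\<^sub>\<infinity>j. a (j * N) x * c powi j)"
    using N by simp
  finally show "\<omega> a = omega_xc \<sigma> x c a" using a by (simp add: omega_xc_def N_def)
qed

text \<open>With \<open>u\<close> a bump at \<open>x\<close> supported in \<open>Fix\<^sub>N\<close>, \<open>j \<mapsto> \<omega> (u \<delta>\<^sup>j\<^sup>N)\<close> is a bounded character of \<open>\<int>\<close>.\<close>
lemma character_PerInt:
  assumes \<omega>: "\<omega> \<in> DeltaA \<sigma>" and x: "\<And>f. f \<in> CX \<Longrightarrow> \<omega> (emb f) = f x" and xP: "x \<in> PerInt \<sigma>"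
  obtains c where "cmod c = 1" "\<omega> = omega_xc \<sigma> x c"
proof -
  define N where "N = int (minper \<sigma> x)"
  obtain u where u: "u \<in> CX" "u x = 1" "\<And>y. cmod (u y) \<le> 1" "\<And>y. u y \<noteq> 0 \<Longrightarrow> y \<in> Fix \<sigma> N"
    using bump_PerInt[OF xP] unfolding N_def by blast
  have u_Fix: "u y \<noteq> 0 \<Longrightarrow> y \<in> Fix \<sigma> (j * N)" for y j
    using u(4) Fix_mult by blast
  define \<gamma> where "\<gamma> = (\<lambda>j. \<omega> (monomial (j * N) u))"
  have "\<gamma> (i + j) = \<gamma> i * \<gamma> j" for i j
    unfolding \<gamma>_def N_def by (rule character_bump_monomial_add[OF \<omega> x xP u(1,2) u(4)[unfolded N_def]])
  moreover have "\<gamma> 0 = 1"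
    using x[OF u(1)] u(2) by (simp add: \<gamma>_def emb_eq_monomial)
  moreover have "cmod (\<gamma> j) \<le> 1" for j
  proof -
    have "cmod (\<gamma> j) \<le> ell_norm (monomial (j * N) u)"
      unfolding \<gamma>_def by (rule norm_character_le[OF \<omega> monomial_in_commutant1[OF u(1) u_Fix]])
    also have "\<dots> \<le> supnorm u" by (rule ell_norm_monomial_le[OF u(1) u_Fix])
    also have "\<dots> \<le> 1" by (rule supnorm_le[OF u(3)])
    finally show ?thesis .
  qed
  ultimately have c: "cmod (\<gamma> 1) = 1" "\<gamma> j = \<gamma> 1 powi j" for j
    using bounded_int_character_powi[of \<gamma>] by blast+
  have "\<omega> (monomial (j * int (minper \<sigma> x)) u) = \<gamma> 1 powi j" for j
    using c(2)[of j] by (simp add: \<gamma>_def N_def)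
  then have "\<omega> = omega_xc \<sigma> x (\<gamma> 1)"
    using u(4) by (intro character_eq_omega_xc[OF \<omega> x xP u(1,2)]) (simp_all add: N_def)
  with c(1) show ?thesis by (rule that)
qed

lemma DeltaA_cases:
  assumes \<omega>: "\<omega> \<in> DeltaA \<sigma>"
  obtains x where "x \<notin> PerInt \<sigma>" "\<omega> = omega_x \<sigma> x"
    | x c where "x \<in> PerInt \<sigma>" "cmod c = 1" "\<omega> = omega_xc \<sigma> x c"
proof -
  obtain x where x: "\<And>f. f \<in> CX \<Longrightarrow> \<omega> (emb f) = f x" by (rule character_point[OF \<omega>]) blast
  show ?thesis
  proof (cases "x \<in> PerInt \<sigma>")
    case True
    obtain c where "cmod c = 1" "\<omega> = omega_xc \<sigma> x c" by (rule character_PerInt[OF \<omega> x True])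
    then show ?thesis by (rule that(2)[OF True])
  next
    case False
    show ?thesis by (rule that(1)[OF False character_not_PerInt[OF \<omega> x False]])
  qed
qed

lemma omega_x_emb: "f \<in> CX \<Longrightarrow> omega_x \<sigma> x (emb f) = f x"
  using emb_in_commutant1[of f] by (simp add: omega_x_def emb_def)

lemma omega_xc_emb:
  assumes x: "x \<in> PerInt \<sigma>" and f: "f \<in> CX"
  shows "omega_xc \<sigma> x c (emb f) = f x"
proof -
  have "omega_xc \<sigma> x c (emb f) = (\<Sum>\<^sub>\<infinity>j. emb f (j * int (minper \<sigma> x)) x * c powi j)"
    using emb_in_commutant1[OF f] by (simp add: omega_xc_def)
  also have "\<dots> = emb f (0 * int (minper \<sigma> x)) x * c powi 0"
    by (rule infsum_eq_single) (use minper_pos[OF x] in \<open>simp add: emb_def\<close>)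
  finally show ?thesis by (simp add: emb_def)
qed

lemma omega_xc_bump:
  assumes x: "x \<in> PerInt \<sigma>"
  obtains a where "\<And>c. omega_xc \<sigma> x c a = c"
proof -
  define N where "N = int (minper \<sigma> x)"
  obtain u where u: "u \<in> CX" "u x = 1" "\<And>y. cmod (u y) \<le> 1" "\<And>y. u y \<noteq> 0 \<Longrightarrow> y \<in> Fix \<sigma> N"
    using bump_PerInt[OF x] unfolding N_def by blast
  have a: "monomial N u \<in> commutant1 \<sigma>" by (rule monomial_in_commutant1[OF u(1,4)])
  have "omega_xc \<sigma> x c (monomial N u) = c" for c
  proof -
    have "omega_xc \<sigma> x c (monomial N u) = (\<Sum>\<^sub>\<infinity>j. monomial N u (j * N) x * c powi j)"
      using a by (simp add: omega_xc_def N_def)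
    also have "\<dots> = monomial N u (1 * N) x * c powi 1"
      by (rule infsum_eq_single) (use minper_pos[OF x] in \<open>auto simp: monomial_def N_def\<close>)
    finally show ?thesis using u(2) by (simp add: monomial_def)
  qed
  then show ?thesis by (rule that)
qed

lemma points_eq_if_emb_eq:
  fixes x y :: 'a
  assumes "\<And>f. f \<in> CX \<Longrightarrow> \<omega> (emb f) = f x" "\<And>f. f \<in> CX \<Longrightarrow> \<omega> (emb f) = f y"
  shows "x = y"
proof (rule CX_separates_points[OF compact_UNIV])
  fix f :: "'a \<Rightarrow> complex" assume "f \<in> CX"
  then show "f x = f y" using assms[of f] by simp
qed

lemma DeltaA_eq:
  "DeltaA \<sigma> = omega_x \<sigma> ` (- PerInt \<sigma>) \<union> (\<lambda>(x, c). omega_xc \<sigma> x c) ` (PerInt \<sigma> \<times> sphere 0 1)"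
proof
  show "DeltaA \<sigma> \<subseteq> omega_x \<sigma> ` (- PerInt \<sigma>) \<union> (\<lambda>(x, c). omega_xc \<sigma> x c) ` (PerInt \<sigma> \<times> sphere 0 1)"
  proof
    fix \<omega> assume "\<omega> \<in> DeltaA \<sigma>"
    then show "\<omega> \<in> omega_x \<sigma> ` (- PerInt \<sigma>) \<union> (\<lambda>(x, c). omega_xc \<sigma> x c) ` (PerInt \<sigma> \<times> sphere 0 1)"
    proof (cases rule: DeltaA_cases)
      case (2 x c)
      then show ?thesis by (intro UnI2 image_eqI[of _ _ "(x, c)"]) auto
    qed auto
  qed
  show "omega_x \<sigma> ` (- PerInt \<sigma>) \<union> (\<lambda>(x, c). omega_xc \<sigma> x c) ` (PerInt \<sigma> \<times> sphere 0 1) \<subseteq> DeltaA \<sigma>"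
    using omega_x_in_DeltaA omega_xc_in_DeltaA by auto
qed

lemma inj_on_omega_x: "inj_on (omega_x \<sigma>) (- PerInt \<sigma>)"
proof (rule inj_onI)
  fix x y assume "omega_x \<sigma> x = omega_x \<sigma> y"
  then show "x = y"
    using omega_x_emb[of _ x] omega_x_emb[of _ y] by (intro points_eq_if_emb_eq[of "omega_x \<sigma> x"]) auto
qed

lemma inj_on_omega_xc: "inj_on (\<lambda>(x, c). omega_xc \<sigma> x c) (PerInt \<sigma> \<times> sphere 0 1)"
proof (rule inj_onI)
  fix p q assume p: "p \<in> PerInt \<sigma> \<times> sphere 0 1" and q: "q \<in> PerInt \<sigma> \<times> sphere 0 1"
    and eq: "(\<lambda>(x, c). omega_xc \<sigma> x c) p = (\<lambda>(x, c). omega_xc \<sigma> x c) q"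
  obtain x c y d where pq: "p = (x, c)" "q = (y, d)" by (cases p, cases q)
  have x: "x \<in> PerInt \<sigma>" and y: "y \<in> PerInt \<sigma>" using p q by (simp_all add: pq)
  have eq: "omega_xc \<sigma> x c = omega_xc \<sigma> y d" using eq by (simp add: pq)
  then have "x = y"
    using omega_xc_emb[OF x, of _ c] omega_xc_emb[OF y, of _ d] by (intro points_eq_if_emb_eq[of "omega_xc \<sigma> x c"]) auto
  obtain a where "\<And>c. omega_xc \<sigma> x c a = c" by (rule omega_xc_bump[OF x]) blast
  then have "c = d" using fun_cong[OF eq, of a] \<open>x = y\<close> by simp
  with \<open>x = y\<close> show "p = q" by (simp add: pq)
qed

lemma omega_x_omega_xc_disjoint:
  "omega_x \<sigma> ` (- PerInt \<sigma>) \<inter> (\<lambda>(x, c). omega_xc \<sigma> x c) ` (PerInt \<sigma> \<times> sphere 0 1) = {}"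
proof (rule ccontr)
  assume "\<not> ?thesis"
  then obtain x y c where x: "x \<notin> PerInt \<sigma>" and y: "y \<in> PerInt \<sigma>" and eq: "omega_x \<sigma> x = omega_xc \<sigma> y c"
    by auto
  then have "x = y"
    using omega_x_emb[of _ x] omega_xc_emb[OF y, of _ c] by (intro points_eq_if_emb_eq[of "omega_x \<sigma> x"]) auto
  with x y show False by simp
qed

lemma omega_x_star: "a \<in> commutant1 \<sigma> \<Longrightarrow> omega_x \<sigma> x (ell_star \<sigma> a) = cnj (omega_x \<sigma> x a)"
  using commutant1_star[of a] by (simp add: omega_x_def ell_star_def)

lemma omega_xc_star:
  assumes x: "x \<in> PerInt \<sigma>" and c: "cmod c = 1" and a: "a \<in> commutant1 \<sigma>"
  shows "omega_xc \<sigma> x c (ell_star \<sigma> a) = cnj (omega_xc \<sigma> x c a)"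
proof -
  define N where "N = int (minper \<sigma> x)"
  have "c \<noteq> 0" using c by auto
  have "c * cnj c = 1" using c complex_norm_square[of c] by simp
  then have "cnj c = c powi (- 1)" using \<open>c \<noteq> 0\<close> by (simp add: power_int_minus field_simps)
  then have cnj_powi: "cnj c powi j = c powi (- j)" for j
    using \<open>c \<noteq> 0\<close> by (simp add: power_int_minus power_int_inverse)
  have "omega_xc \<sigma> x c (ell_star \<sigma> a) = (\<Sum>\<^sub>\<infinity>j. cnj (a (- j * N) x) * c powi j)"
    using commutant1_star[OF a] ipow_uminus_Fix[OF Fix_multiple_minper[OF x]]
    by (simp add: omega_xc_def ell_star_def N_def)
  also have "\<dots> = (\<Sum>\<^sub>\<infinity>j. cnj (a (j * N) x) * c powi (- j))"
    by (rule infsum_reindex_bij_witness[of _ uminus uminus]) auto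
  also have "\<dots> = (\<Sum>\<^sub>\<infinity>j. cnj (a (j * N) x * c powi j))"
    by (simp add: cnj_powi del: infsum_cnj)
  also have "\<dots> = cnj (\<Sum>\<^sub>\<infinity>j. a (j * N) x * c powi j)"
    by (rule infsum_cnj)
  also have "\<dots> = cnj (omega_xc \<sigma> x c a)"
    using a by (simp add: omega_xc_def N_def)
  finally show ?thesis .
qed

lemma character_star:
  assumes \<omega>: "\<omega> \<in> DeltaA \<sigma>" and a: "a \<in> commutant1 \<sigma>"
  shows "\<omega> (ell_star \<sigma> a) = cnj (\<omega> a)"
  using \<omega>
proof (cases rule: DeltaA_cases)
  case (1 x)
  then show ?thesis using omega_x_star[OF a] by simp
next
  case (2 x c)
  then show ?thesis using omega_xc_star[OF _ _ a] by simp
qed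

lemma continuous_map_restr_char:
  "continuous_map (gelfand_top (commutant1 \<sigma>) (DeltaA \<sigma>)) (gelfand_top CX DeltaCX) restr_char"
  unfolding gelfand_top_def continuous_map_in_subtopology
proof (intro conjI)
  show "restr_char \<in> topspace (subtopology (product_topology (\<lambda>_. euclidean) (commutant1 \<sigma>)) (DeltaA \<sigma>)) \<rightarrow> DeltaCX"
    using restr_char_in_DeltaCX by auto
  show "continuous_map (subtopology (product_topology (\<lambda>_. euclidean) (commutant1 \<sigma>)) (DeltaA \<sigma>))
      (product_topology (\<lambda>_. euclidean) CX) restr_char"
    unfolding continuous_map_componentwise
  proof (intro conjI ballI)
    show "restr_char ` topspace (subtopology (product_topology (\<lambda>_. euclidean) (commutant1 \<sigma>)) (DeltaA \<sigma>))
        \<subseteq> extensional CX"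
      by (auto simp: restr_char_def)
    fix f :: "'a \<Rightarrow> complex" assume f: "f \<in> CX"
    have "continuous_map (subtopology (product_topology (\<lambda>_. euclidean) (commutant1 \<sigma>)) (DeltaA \<sigma>)) euclidean
        (\<lambda>\<omega>. \<omega> (emb f))"
      by (rule continuous_map_from_subtopology[OF continuous_map_product_projection[OF emb_in_commutant1[OF f]]])
    then show "continuous_map (subtopology (product_topology (\<lambda>_. euclidean) (commutant1 \<sigma>)) (DeltaA \<sigma>)) euclidean
        (\<lambda>\<omega>. restr_char \<omega> f)"
      using f by (simp add: restr_char_def)
  qed
qed

lemma restr_char_image: "restr_char ` DeltaA \<sigma> = DeltaCX"
proof
  show "restr_char ` DeltaA \<sigma> \<subseteq> DeltaCX" using restr_char_in_DeltaCX by auto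
  show "DeltaCX \<subseteq> restr_char ` DeltaA \<sigma>"
  proof
    fix \<phi> :: "('a \<Rightarrow> complex) \<Rightarrow> complex" assume "\<phi> \<in> DeltaCX"
    then obtain x where x: "\<phi> = restrict (\<lambda>f. f x) CX" by (rule DeltaCX_point_eval[OF compact_UNIV])
    obtain \<omega> where \<omega>: "\<omega> \<in> DeltaA \<sigma>" "\<And>f. f \<in> CX \<Longrightarrow> \<omega> (emb f) = f x"
    proof (cases "x \<in> PerInt \<sigma>")
      case True
      then show ?thesis using that[OF omega_xc_in_DeltaA[OF True, of 1]] omega_xc_emb[OF True] by simp
    next
      case False
      then show ?thesis using that[OF omega_x_in_DeltaA[OF False]] omega_x_emb by simp
    qed
    have "restr_char \<omega> = \<phi>" unfolding x restr_char_def using \<omega>(2) by (intro restrict_ext) auto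
    then show "\<phi> \<in> restr_char ` DeltaA \<sigma>" using \<omega>(1) by blast
  qed
qed

end

theorem proposition3p8:
  fixes \<sigma> \<sigma>' :: "'a::t2_space \<Rightarrow> 'a"
  assumes "compact (UNIV :: 'a set)"
    and "homeomorphism UNIV UNIV \<sigma> \<sigma>'"
  shows "(DeltaA \<sigma> = omega_x \<sigma> ` (- PerInt \<sigma>)
                 \<union> (\<lambda>(x, c). omega_xc \<sigma> x c) ` (PerInt \<sigma> \<times> sphere 0 1)) \<and>
    inj_on (omega_x \<sigma>) (- PerInt \<sigma>) \<and>
    inj_on (\<lambda>(x, c). omega_xc \<sigma> x c) (PerInt \<sigma> \<times> sphere 0 1) \<and>
    omega_x \<sigma> ` (- PerInt \<sigma>) \<inter> (\<lambda>(x, c). omega_xc \<sigma> x c) ` (PerInt \<sigma> \<times> sphere 0 1) = {} \<and>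
    (\<forall>\<omega>\<in>DeltaA \<sigma>. \<forall>a\<in>commutant1 \<sigma>. \<omega> (ell_star \<sigma> a) = cnj (\<omega> a)) \<and>
    continuous_map (gelfand_top (commutant1 \<sigma>) (DeltaA \<sigma>)) (gelfand_top CX DeltaCX) restr_char \<and>
    restr_char ` DeltaA \<sigma> = DeltaCX"
proof -
  interpret compact_system \<sigma> \<sigma>'
    using assms by unfold_locales
  show ?thesis
    by (intro conjI ballI DeltaA_eq inj_on_omega_x inj_on_omega_xc omega_x_omega_xc_disjoint
        character_star continuous_map_restr_char restr_char_image)
qed

end
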